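(* Let $N,n,m,p$ be positive integers, $A\in\mathbb{R}^{n\times n}$, $B\in\mathbb{R}^{n\times p}$, $C\in\mathbb{R}^{m\times n}$, $H\in\mathbb{R}^{n\times m}$, $W=[w_{ij}]\in\mathbb{R}^{N\times N}$ with $w_{ii}=0$ for all $i$, $\Delta=\mathrm{diag}(\delta_1,\dots,\delta_N)$ with $\delta_i\in\{0,1\}$, and $h>0$. Put $\mathcal{B}(h)=\int_0^h e^{A\tau}d\tau\,B$, $\mathcal{H}(h)=\int_0^h e^{A\tau}d\tau\,HC$, $\Phi_s=I_N\otimes e^{Ah}+W\otimes\mathcal{H}(h)$, $\Psi_s=\Delta\otimes\mathcal{B}(h)$. Assume $W$ is diagonalizable, and let $v_1,\dots,v_N\in\mathbb{C}^{1\times N}$ be linearly independent row vectors with $v_kW=\lambda_kv_k$ ($\lambda_1,\dots,\lambda_N$ the eigenvalues of $W$ listed with multiplicity). For $k=1,\dots,N$ let $E_k=e^{Ah}+\lambda_k\mathcal{H}(h)$. Suppose that: (1) the pair $(W,\Delta)$ is controllable; (2) the pair $(E_k,\mathcal{B}(h))$ is controllable for every $k=1,\dots,N$; (3) whenever $\theta\in\mathbb{C}$ is a common eigenvalue of $E_{k_1},\dots,E_{k_q}$ for distinct indices $k_1,\dots,k_q\in\{1,\dots,N\}$ with $1<q\le N$, then $(v_{k_1}\otimes\xi_{k_1}+\dots+v_{k_q}\otimes\xi_{k_q})(\Delta\otimes\mathcal{B}(h))\neq0$ for all $\xi_j\in M(\theta\,|\,E_j)$, $j=k_1,\dots,k_q$,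 with $(\xi_{k_1},\dots,\xi_{k_q})\neq0$. Then the networked sampled-data system $X(k+1)=\Phi_sX(k)+\Psi_sU(k)$ is controllable.
   Context: The networked sampled-data system is the discrete-time system $X(k+1)=\Phi_sX(k)+\Psi_sU(k)$, $X(k)\in\mathbb{R}^{Nn}$, $U(k)\in\mathbb{R}^{Np}$; it is called controllable if every initial state can be steered to the origin in finitely many steps. For $F\in\mathbb{C}^{q\times q}$ and $G\in\mathbb{C}^{q\times s}$, the pair $(F,G)$ is called controllable if $\mathrm{rank}[sI_q-F,\ G]=q$ for every $s\in\mathbb{C}$. For a square matrix $E$ and $\theta\in\mathbb{C}$, $M(\theta\,|\,E)=\{\xi \text{ row vector}:\ \xi E=\theta\xi\}$ is the left eigenspace of $E$ for $\theta$ (including $0$). $\otimes$ is the Kronecker product. *)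

theory Defs
  imports "HOL-Analysis.Analysis" "Jordan_Normal_Form.DL_Rank" "Jordan_Normal_Form.Char_Poly"
begin

definition exp_mat :: "real mat \<Rightarrow> real mat" where
  "exp_mat M = mat (dim_row M) (dim_col M) (\<lambda>(i,j). \<Sum>k. (M ^\<^sub>m k) $$ (i,j) / fact k)"

definition int_exp_mat :: "real mat \<Rightarrow> real \<Rightarrow> real mat" where
  "int_exp_mat M h = mat (dim_row M) (dim_col M)
     (\<lambda>(i,j). integral {0..h} (\<lambda>\<tau>. exp_mat (\<tau> \<cdot>\<^sub>m M) $$ (i,j)))"

definition kron :: "'a :: times mat \<Rightarrow> 'a mat \<Rightarrow> 'a mat" where
  "kron P Q = mat (dim_row P * dim_row Q) (dim_col P * dim_col Q)
     (\<lambda>(i,j). P $$ (i div dim_row Q, j div dim_col Q) * Q $$ (i mod dim_row Q, j mod dim_col Q))"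

(* Kronecker product of row vectors (row vectors are represented as vectors) *)
definition kron_vec :: "'a :: times vec \<Rightarrow> 'a vec \<Rightarrow> 'a vec" where
  "kron_vec x y = Matrix.vec (dim_vec x * dim_vec y) (\<lambda>i. x $ (i div dim_vec y) * y $ (i mod dim_vec y))"

definition row_mult :: "'a :: semiring_0 vec \<Rightarrow> 'a mat \<Rightarrow> 'a vec" where
  "row_mult x M = Matrix.vec (dim_col M) (\<lambda>j. x \<bullet> col M j)"

(* horizontal concatenation [F, G] *)
definition hcat :: "'a :: zero mat \<Rightarrow> 'a mat \<Rightarrow> 'a mat" where
  "hcat F G = four_block_mat F G (0\<^sub>m 0 (dim_col F)) (0\<^sub>m 0 (dim_col G))"

definition ctrb_pair :: "complex mat \<Rightarrow> complex mat \<Rightarrow> bool" where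
  "ctrb_pair F G = (\<forall>s::complex.
     vec_space.rank (dim_row F) (hcat (s \<cdot>\<^sub>m 1\<^sub>m (dim_row F) - F) G) = dim_row F)"

(* left eigenspace M(\<theta> | E), including 0 *)
definition left_eigenspace :: "complex \<Rightarrow> complex mat \<Rightarrow> complex vec set" where
  "left_eigenspace \<theta> E = {\<xi> \<in> carrier_vec (dim_row E). row_mult \<xi> E = \<theta> \<cdot>\<^sub>v \<xi>}"

fun traj :: "real mat \<Rightarrow> real mat \<Rightarrow> real vec \<Rightarrow> (nat \<Rightarrow> real vec) \<Rightarrow> nat \<Rightarrow> real vec" where
  "traj \<Phi> \<Psi> X0 U 0 = X0"
| "traj \<Phi> \<Psi> X0 U (Suc k) = \<Phi> *\<^sub>v traj \<Phi> \<Psi> X0 U k + \<Psi> *\<^sub>v U k"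

definition ds_controllable :: "real mat \<Rightarrow> real mat \<Rightarrow> bool" where
  "ds_controllable \<Phi> \<Psi> = (\<forall>X0 \<in> carrier_vec (dim_row \<Phi>). \<exists>K (U :: nat \<Rightarrow> real vec).
     (\<forall>k. U k \<in> carrier_vec (dim_col \<Psi>)) \<and> traj \<Phi> \<Psi> X0 U K = 0\<^sub>v (dim_row \<Phi>))"

abbreviation cmat :: "real mat \<Rightarrow> complex mat" where
  "cmat M \<equiv> map_mat complex_of_real M"

end

(* By Hautus' test, (\<Phi>\<^sub>s, \<Psi>\<^sub>s) is controllable unless some nonzero left eigenvector z of \<Phi>\<^sub>s
   satisfies z \<Psi>\<^sub>s = 0. As the v\<^sub>k form a basis, z expands uniquely as z = \<Sum>\<^sub>k v\<^sub>k \<otimes> \<xi>\<^sub>k, and the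
   mixed-product rule turns z \<Phi>\<^sub>s = \<theta> z into \<xi>\<^sub>k E\<^sub>k = \<theta> \<xi>\<^sub>k for every k. If two or more \<xi>\<^sub>k are
   nonzero, condition (3) forbids z \<Psi>\<^sub>s = 0; if exactly one is, z \<Psi>\<^sub>s = (v\<^sub>k \<Delta>) \<otimes> (\<xi>\<^sub>k B(h)) and both
   factors are nonzero by the rank conditions (1) and (2).
   Hautus' test itself goes through the controllability Gramian G over M = Nn steps. If G is
   invertible, the input U(j) = \<Psi>\<^sup>T (\<Phi>\<^sup>T)\<^sup>M\<^sup>-\<^sup>1\<^sup>-\<^sup>j G\<^sup>-\<^sup>1 (-\<Phi>\<^sup>M X(0)) steers X(0) to 0. Otherwise a real
   null vector y of G is annihilated by \<Psi>\<^sup>T (\<Phi>\<^sup>T)\<^sup>j for all j < M, and factoring a polynomial q with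
   q(\<Phi>\<^sup>T) y = 0 into linear factors produces an eigenvector of \<Phi>\<^sup>T in the Krylov space of y, hence
   one annihilated by \<Psi>\<^sup>T. *)

theory Submission
  imports Defs
begin

no_notation vec_nth (infixl "$" 90)
no_notation inner (infix "\<bullet>" 70)

lemma eq_of_minus_eq_zero_vec:
  fixes a b :: "'a :: ab_group_add vec"
  assumes "a \<in> carrier_vec n" "b \<in> carrier_vec n" "a - b = 0\<^sub>v n"
  shows "a = b"
proof (rule eq_vecI)
  fix i assume i: "i < dim_vec b"
  have "(a - b) $ i = 0\<^sub>v n $ i" using assms(3) by simp
  then show "a $ i = b $ i" using i assms(1,2) by simp
qed (use assms in simp)

lemma finsum_vec_cong:
  assumes "\<And>k. k \<in> K \<Longrightarrow> f k = g k" "\<And>k. k \<in> K \<Longrightarrow> g k \<in> carrier_vec n"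
  shows "finsum_vec TYPE('a :: comm_monoid_add) n f K = finsum_vec TYPE('a) n g K"
  unfolding finsum_vec_def
  by (rule comm_monoid.finprod_cong'[OF comm_monoid_vec refl]) (use assms in \<open>auto simp: monoid_vec_simps\<close>)

lemma smult_finsum_vec:
  fixes f :: "'b \<Rightarrow> 'a :: comm_ring_1 vec"
  assumes K: "finite K" and f: "\<And>k. k \<in> K \<Longrightarrow> f k \<in> carrier_vec n"
  shows "c \<cdot>\<^sub>v finsum_vec TYPE('a) n f K = finsum_vec TYPE('a) n (\<lambda>k. c \<cdot>\<^sub>v f k) K"
proof (rule eq_vecI)
  have sum_carrier: "finsum_vec TYPE('a) n f K \<in> carrier_vec n" using f by (intro finsum_vec_closed) auto
  fix i assume "i < dim_vec (finsum_vec TYPE('a) n (\<lambda>k. c \<cdot>\<^sub>v f k) K)"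
  then have i: "i < n" using f by (subst (asm) carrier_vecD[OF finsum_vec_closed]) auto
  have "finsum_vec TYPE('a) n (\<lambda>k. c \<cdot>\<^sub>v f k) K $ i = (\<Sum>k\<in>K. (c \<cdot>\<^sub>v f k) $ i)"
    using K i f by (intro index_finsum_vec) auto
  also have "\<dots> = (\<Sum>k\<in>K. c * f k $ i)"
  proof (rule sum.cong[OF refl])
    fix k assume "k \<in> K"
    then have "dim_vec (f k) = n" using f by (simp add: carrier_vecD)
    then show "(c \<cdot>\<^sub>v f k) $ i = c * f k $ i" using i by simp
  qed
  finally show "(c \<cdot>\<^sub>v finsum_vec TYPE('a) n f K) $ i = finsum_vec TYPE('a) n (\<lambda>k. c \<cdot>\<^sub>v f k) K $ i"
    using sum_carrier K f i by (simp add: index_finsum_vec sum_distrib_left)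
next
  show "dim_vec (c \<cdot>\<^sub>v finsum_vec TYPE('a) n f K) = dim_vec (finsum_vec TYPE('a) n (\<lambda>k. c \<cdot>\<^sub>v f k) K)"
    using f finsum_vec_closed[of f K n] finsum_vec_closed[of "\<lambda>k. c \<cdot>\<^sub>v f k" K n] by auto
qed

lemma zero_mat_mult_vec: "x \<in> carrier_vec nc \<Longrightarrow> 0\<^sub>m nr nc *\<^sub>v x = 0\<^sub>v nr"
  by (intro eq_vecI) (auto simp: scalar_prod_def)

lemma (in semiring_hom) mat_hom_add:
  "A \<in> carrier_mat nr nc \<Longrightarrow> B \<in> carrier_mat nr nc \<Longrightarrow> mat\<^sub>h (A + B) = mat\<^sub>h A + mat\<^sub>h B"
  by (intro eq_matI) (auto simp: hom_add)

lemma dim_row_mult [simp]: "dim_vec (row_mult x M) = dim_col M"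
  by (simp add: row_mult_def)

lemma row_mult_carrier: "M \<in> carrier_mat nr nc \<Longrightarrow> row_mult x M \<in> carrier_vec nc"
  by (rule carrier_vecI) simp

lemma index_row_mult:
  assumes "j < dim_col M" and "x \<in> carrier_vec (dim_row M)"
  shows "row_mult x M $ j = (\<Sum>t<dim_row M. x $ t * M $$ (t, j))"
  using assms by (simp add: row_mult_def scalar_prod_def lessThan_atLeast0)

lemma row_mult_eq_transpose:
  fixes x :: "'a :: comm_semiring_0 vec"
  assumes "x \<in> carrier_vec (dim_row M)"
  shows "row_mult x M = M\<^sup>T *\<^sub>v x"
  using assms by (intro eq_vecI) (auto simp: row_mult_def comm_scalar_prod[of x "dim_row M"])

lemma row_mult_add_mat:
  fixes x :: "'a :: comm_semiring_0 vec"
  assumes "P \<in> carrier_mat nr nc" "Q \<in> carrier_mat nr nc" "x \<in> carrier_vec nr"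
  shows "row_mult x (P + Q) = row_mult x P + row_mult x Q"
  using assms by (simp add: row_mult_eq_transpose transpose_add add_mult_distrib_mat_vec[of _ nc nr])

lemma row_mult_minus_mat:
  fixes x :: "'a :: comm_ring_1 vec"
  assumes "P \<in> carrier_mat nr nc" "Q \<in> carrier_mat nr nc" "x \<in> carrier_vec nr"
  shows "row_mult x (P - Q) = row_mult x P - row_mult x Q"
  using assms by (intro eq_vecI) (auto simp: index_row_mult sum_subtractf algebra_simps)

lemma row_mult_smult_mat:
  fixes x :: "'a :: comm_ring_1 vec"
  assumes "P \<in> carrier_mat nr nc" "x \<in> carrier_vec nr"
  shows "row_mult x (c \<cdot>\<^sub>m P) = c \<cdot>\<^sub>v row_mult x P"
  using assms by (intro eq_vecI) (auto simp: index_row_mult sum_distrib_left mult.left_commute)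

lemma row_mult_one_mat [simp]:
  fixes x :: "'a :: comm_ring_1 vec"
  assumes "x \<in> carrier_vec n"
  shows "row_mult x (1\<^sub>m n) = x"
  using assms by (simp add: row_mult_eq_transpose)

lemma row_mult_zero_vec [simp]:
  fixes M :: "'a :: comm_ring_1 mat"
  shows "row_mult (0\<^sub>v (dim_row M)) M = 0\<^sub>v (dim_col M)"
  by (intro eq_vecI) (auto simp: row_mult_def)

lemma row_mult_finsum_vec:
  fixes M :: "'a :: comm_ring_1 mat"
  assumes M: "M \<in> carrier_mat nr nc" and K: "finite K" and f: "\<And>k. k \<in> K \<Longrightarrow> f k \<in> carrier_vec nr"
  shows "row_mult (finsum_vec TYPE('a) nr f K) M = finsum_vec TYPE('a) nc (\<lambda>k. row_mult (f k) M) K"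
  using K f
proof (induction K rule: finite_induct)
  case empty
  then show ?case using M row_mult_zero_vec[of M] by (simp add: finsum_vec_empty)
next
  case (insert k K)
  have f: "f \<in> K \<rightarrow> carrier_vec nr" "f k \<in> carrier_vec nr" using insert.prems by auto
  have fM: "(\<lambda>k. row_mult (f k) M) \<in> K \<rightarrow> carrier_vec nc" "row_mult (f k) M \<in> carrier_vec nc"
    using M by (auto intro: row_mult_carrier)
  have IH: "row_mult (finsum_vec TYPE('a) nr f K) M = finsum_vec TYPE('a) nc (\<lambda>k. row_mult (f k) M) K"
    using insert by simp
  have "row_mult (finsum_vec TYPE('a) nr f (insert k K)) M
      = row_mult (f k + finsum_vec TYPE('a) nr f K) M"
    by (simp only: finsum_vec_insert[OF insert.hyps f])
  also have "\<dots> = row_mult (f k) M + row_mult (finsum_vec TYPE('a) nr f K) M"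
    using M f finsum_vec_closed[OF f(1)]
    by (simp add: row_mult_eq_transpose mult_add_distrib_mat_vec[of _ nc nr])
  also have "\<dots> = finsum_vec TYPE('a) nc (\<lambda>k. row_mult (f k) M) (insert k K)"
    by (simp only: IH finsum_vec_insert[OF insert.hyps fM])
  finally show ?case .
qed

lemma finite_set_card_cases:
  assumes "finite K"
  obtains "K = {}" | k where "K = {k}" | "1 < card K"
proof -
  have "card K = 0 \<or> card K = 1 \<or> 1 < card K" by linarith
  then show thesis
  proof (elim disjE)
    assume "card K = 0"
    then show thesis using assms that(1) by simp
  next
    assume "card K = 1"
    then show thesis using that(2) by (elim card_1_singletonE)
  qed (use that(3) in simp)
qed

section \<open>Kronecker products\<close>

lemma block_index_less: "(i :: nat) < N \<Longrightarrow> a < n \<Longrightarrow> i * n + a < N * n"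
proof -
  assume "i < N" "a < n"
  then have "i * n + a < Suc i * n" by simp
  also have "\<dots> \<le> N * n" using \<open>i < N\<close> by (intro mult_le_mono1) simp
  finally show ?thesis .
qed

lemma sum_blocks:
  fixes f :: "nat \<Rightarrow> 'a :: comm_monoid_add"
  shows "(\<Sum>r < N * n. f r) = (\<Sum>i<N. \<Sum>a<n. f (i * n + a))"
proof -
  have "(\<Sum>r < N * n. f r) = (\<Sum>i<N. \<Sum>r = i * n..<i * n + n. f r)"
    using sum.nat_group[of f n N] by (simp add: lessThan_atLeast0 mult.commute)
  also have "\<dots> = (\<Sum>i<N. \<Sum>a<n. f (i * n + a))"
  proof (rule sum.cong[OF refl])
    fix i
    show "(\<Sum>r = i * n..<i * n + n. f r) = (\<Sum>a<n. f (i * n + a))"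
      using sum.shift_bounds_nat_ivl[of f 0 "i * n" n] by (simp add: lessThan_atLeast0 add.commute)
  qed
  finally show ?thesis .
qed

lemma eq_vec_blocks:
  assumes "x \<in> carrier_vec (N * n)" "y \<in> carrier_vec (N * n)"
    and "\<And>i a. i < N \<Longrightarrow> a < n \<Longrightarrow> x $ (i * n + a) = y $ (i * n + a)"
  shows "x = y"
proof (rule eq_vecI)
  fix r assume "r < dim_vec y"
  then have r: "r < N * n" using assms by simp
  then have "0 < n" by (cases n) auto
  with r have "r div n < N" "r mod n < n" by (auto simp: less_mult_imp_div_less)
  then show "x $ r = y $ r" using assms(3)[of "r div n" "r mod n"] by simp
qed (use assms in simp)

lemma kron_carrier_mat:
  "P \<in> carrier_mat a b \<Longrightarrow> Q \<in> carrier_mat c d \<Longrightarrow> kron P Q \<in> carrier_mat (a * c) (b * d)"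
  unfolding kron_def carrier_mat_def by auto

lemma index_kron_block:
  assumes "P \<in> carrier_mat N N'" "Q \<in> carrier_mat n n'"
    and "i < N" "a < n" "j < N'" "b < n'"
  shows "kron P Q $$ (i * n + a, j * n' + b) = P $$ (i, j) * Q $$ (a, b)"
  using assms block_index_less[of i N a n] block_index_less[of j N' b n'] unfolding kron_def by auto

lemma dim_kron_vec [simp]: "dim_vec (kron_vec x y) = dim_vec x * dim_vec y"
  by (simp add: kron_vec_def)

lemma kron_vec_carrier:
  "x \<in> carrier_vec N \<Longrightarrow> y \<in> carrier_vec n \<Longrightarrow> kron_vec x y \<in> carrier_vec (N * n)"
  unfolding kron_vec_def carrier_vec_def by auto

lemma index_kron_vec_block:
  assumes "x \<in> carrier_vec N" "y \<in> carrier_vec n" "i < N" "a < n"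
  shows "kron_vec x y $ (i * n + a) = x $ i * y $ a"
  using assms block_index_less[of i N a n] unfolding kron_vec_def by auto

lemma kron_vec_add_right:
  fixes x y y' :: "'a :: comm_ring_1 vec"
  assumes "x \<in> carrier_vec N" "y \<in> carrier_vec n" "y' \<in> carrier_vec n"
  shows "kron_vec x (y + y') = kron_vec x y + kron_vec x y'"
  using assms by (intro eq_vec_blocks[of _ N n])
    (auto simp: kron_vec_carrier index_kron_vec_block block_index_less distrib_left)

lemma kron_vec_smult_left:
  fixes x y :: "'a :: comm_ring_1 vec"
  assumes "x \<in> carrier_vec N" "y \<in> carrier_vec n"
  shows "kron_vec (c \<cdot>\<^sub>v x) y = kron_vec x (c \<cdot>\<^sub>v y)"
  using assms by (intro eq_vec_blocks[of _ N n])
    (auto simp: kron_vec_carrier index_kron_vec_block mult_ac)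

lemma kron_vec_smult_right:
  fixes x y :: "'a :: comm_ring_1 vec"
  assumes "x \<in> carrier_vec N" "y \<in> carrier_vec n"
  shows "c \<cdot>\<^sub>v kron_vec x y = kron_vec x (c \<cdot>\<^sub>v y)"
  using assms by (intro eq_vec_blocks[of _ N n])
    (auto simp: kron_vec_carrier index_kron_vec_block block_index_less mult_ac)

lemma kron_vec_nonzero:
  fixes x y :: "'a :: idom vec"
  assumes "x \<in> carrier_vec N" "x \<noteq> 0\<^sub>v N" "y \<in> carrier_vec n" "y \<noteq> 0\<^sub>v n"
  shows "kron_vec x y \<noteq> 0\<^sub>v (N * n)"
proof -
  obtain i where i: "i < N" "x $ i \<noteq> 0" using assms(1,2) by (auto simp: vec_eq_iff)
  obtain a where a: "a < n" "y $ a \<noteq> 0" using assms(3,4) by (auto simp: vec_eq_iff)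
  have "kron_vec x y $ (i * n + a) \<noteq> 0"
    using assms i a by (simp add: index_kron_vec_block)
  then show ?thesis using block_index_less[OF i(1) a(1)] by auto
qed

lemma row_mult_kron:
  fixes P Q :: "'a :: comm_ring_1 mat"
  assumes P: "P \<in> carrier_mat N N'" and Q: "Q \<in> carrier_mat n n'"
    and x: "x \<in> carrier_vec N" and y: "y \<in> carrier_vec n"
  shows "row_mult (kron_vec x y) (kron P Q) = kron_vec (row_mult x P) (row_mult y Q)"
proof (rule eq_vec_blocks[of _ N' n'])
  have PQ: "kron P Q \<in> carrier_mat (N * n) (N' * n')" by (rule kron_carrier_mat[OF P Q])
  show "row_mult (kron_vec x y) (kron P Q) \<in> carrier_vec (N' * n')"
    using PQ by (rule row_mult_carrier)
  show "kron_vec (row_mult x P) (row_mult y Q) \<in> carrier_vec (N' * n')"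
    using P Q by (intro kron_vec_carrier row_mult_carrier)
  have xP: "row_mult x P \<in> carrier_vec N'" and yQ: "row_mult y Q \<in> carrier_vec n'"
    using P Q by (auto intro: row_mult_carrier)
  fix j b assume j: "j < N'" and b: "b < n'"
  have "row_mult (kron_vec x y) (kron P Q) $ (j * n' + b)
      = (\<Sum>r < N * n. kron_vec x y $ r * kron P Q $$ (r, j * n' + b))"
    using PQ x y block_index_less[OF j b] by (simp add: index_row_mult kron_vec_carrier)
  also have "\<dots> = (\<Sum>i<N. \<Sum>a<n. (x $ i * P $$ (i, j)) * (y $ a * Q $$ (a, b)))"
    unfolding sum_blocks
  proof (intro sum.cong refl)
    fix i a assume "i \<in> {..<N}" "a \<in> {..<n}"
    then show "kron_vec x y $ (i * n + a) * kron P Q $$ (i * n + a, j * n' + b)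
        = (x $ i * P $$ (i, j)) * (y $ a * Q $$ (a, b))"
      using P Q x y j b by (simp add: index_kron_vec_block index_kron_block mult_ac)
  qed
  also have "\<dots> = row_mult x P $ j * row_mult y Q $ b"
    using P Q x y j b by (simp add: index_row_mult sum_product)
  also have "\<dots> = kron_vec (row_mult x P) (row_mult y Q) $ (j * n' + b)"
    using xP yQ j b by (simp add: index_kron_vec_block)
  finally show "row_mult (kron_vec x y) (kron P Q) $ (j * n' + b)
      = kron_vec (row_mult x P) (row_mult y Q) $ (j * n' + b)" .
qed

lemma (in semiring_hom) mat_hom_kron: "mat\<^sub>h (kron P Q) = kron (mat\<^sub>h P) (mat\<^sub>h Q)"
proof (rule eq_matI)
  fix i j assume "i < dim_row (kron (mat\<^sub>h P) (mat\<^sub>h Q))" "j < dim_col (kron (mat\<^sub>h P) (mat\<^sub>h Q))"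
  then have i: "i < dim_row P * dim_row Q" and j: "j < dim_col P * dim_col Q"
    unfolding kron_def by auto
  have "0 < dim_row Q" using i by (cases "dim_row Q") auto
  moreover have "0 < dim_col Q" using j by (cases "dim_col Q") auto
  ultimately have "i div dim_row Q < dim_row P" "j div dim_col Q < dim_col P"
    "i mod dim_row Q < dim_row Q" "j mod dim_col Q < dim_col Q"
    using i j by (auto simp: less_mult_imp_div_less)
  then show "mat\<^sub>h (kron P Q) $$ (i, j) = kron (mat\<^sub>h P) (mat\<^sub>h Q) $$ (i, j)"
    using i j unfolding kron_def by (simp add: hom_mult)
qed (auto simp: kron_def)

lemma index_finsum_kron_vec:
  assumes "finite K" "\<And>k. k \<in> K \<Longrightarrow> x k \<in> carrier_vec N" "\<And>k. k \<in> K \<Longrightarrow> y k \<in> carrier_vec n"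
    and "i < N" "a < n"
  shows "finsum_vec TYPE('a :: comm_ring_1) (N * n) (\<lambda>k. kron_vec (x k) (y k)) K $ (i * n + a)
    = (\<Sum>k\<in>K. x k $ i * y k $ a)"
  using assms block_index_less[of i N a n]
  by (subst index_finsum_vec) (auto intro!: sum.cong index_kron_vec_block simp: kron_vec_carrier)

lemma finsum_kron_vec_carrier:
  assumes "\<And>k. k \<in> K \<Longrightarrow> x k \<in> carrier_vec N" "\<And>k. k \<in> K \<Longrightarrow> y k \<in> carrier_vec n"
  shows "finsum_vec TYPE('a :: comm_ring_1) (N * n) (\<lambda>k. kron_vec (x k) (y k)) K \<in> carrier_vec (N * n)"
  using assms by (intro finsum_vec_closed) (auto simp: kron_vec_carrier)

lemma finsum_kron_vec_restrict:
  fixes v \<xi> :: "nat \<Rightarrow> 'a :: comm_ring_1 vec"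
  assumes K: "K \<subseteq> {..<N}" and v: "\<forall>k<N. v k \<in> carrier_vec N" and \<xi>: "\<And>k. \<xi> k \<in> carrier_vec n"
    and zero: "\<And>k. k < N \<Longrightarrow> k \<notin> K \<Longrightarrow> \<xi> k = 0\<^sub>v n"
  shows "finsum_vec TYPE('a) (N * n) (\<lambda>k. kron_vec (v k) (\<xi> k)) {..<N}
    = finsum_vec TYPE('a) (N * n) (\<lambda>k. kron_vec (v k) (\<xi> k)) K"
proof (rule eq_vec_blocks[of _ N n])
  have fK: "finite K" using K finite_subset by blast
  show "finsum_vec TYPE('a) (N * n) (\<lambda>k. kron_vec (v k) (\<xi> k)) {..<N} \<in> carrier_vec (N * n)"
    "finsum_vec TYPE('a) (N * n) (\<lambda>k. kron_vec (v k) (\<xi> k)) K \<in> carrier_vec (N * n)"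
    using K v \<xi> by (auto intro!: finsum_kron_vec_carrier)
  fix i a assume i: "i < N" and a: "a < n"
  have "(\<Sum>k<N. v k $ i * \<xi> k $ a) = (\<Sum>k\<in>K. v k $ i * \<xi> k $ a)"
    using K zero a by (intro sum.mono_neutral_right) auto
  then show "finsum_vec TYPE('a) (N * n) (\<lambda>k. kron_vec (v k) (\<xi> k)) {..<N} $ (i * n + a)
      = finsum_vec TYPE('a) (N * n) (\<lambda>k. kron_vec (v k) (\<xi> k)) K $ (i * n + a)"
    using K fK v \<xi> i a by (subst (1 2) index_finsum_kron_vec) auto
qed

section \<open>Expansion along a basis of row vectors\<close>

definition lin_indpt_family :: "nat \<Rightarrow> (nat \<Rightarrow> 'a :: field vec) \<Rightarrow> bool" where
  "lin_indpt_family N v \<longleftrightarrow>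
     (\<forall>c. finsum_vec TYPE('a) N (\<lambda>k. c k \<cdot>\<^sub>v v k) {..<N} = 0\<^sub>v N \<longrightarrow> (\<forall>k<N. c k = 0))"

lemma index_finsum_smult_vec:
  fixes v :: "nat \<Rightarrow> 'a :: comm_ring_1 vec"
  assumes "\<forall>k<N. v k \<in> carrier_vec n" "i < n"
  shows "finsum_vec TYPE('a) n (\<lambda>k. c k \<cdot>\<^sub>v v k) {..<N} $ i = (\<Sum>k<N. c k * v k $ i)"
proof -
  have "finsum_vec TYPE('a) n (\<lambda>k. c k \<cdot>\<^sub>v v k) {..<N} $ i = (\<Sum>k<N. (c k \<cdot>\<^sub>v v k) $ i)"
    by (rule index_finsum_vec) (use assms in auto)
  also have "\<dots> = (\<Sum>k<N. c k * v k $ i)"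
    using assms by (intro sum.cong) auto
  finally show ?thesis .
qed

lemma lin_indpt_family_nonzero:
  fixes v :: "nat \<Rightarrow> 'a :: field vec"
  assumes v: "\<forall>k<N. v k \<in> carrier_vec N" "lin_indpt_family N v" and k: "k < N"
  shows "v k \<noteq> 0\<^sub>v N"
proof
  assume vk: "v k = 0\<^sub>v N"
  define c :: "nat \<Rightarrow> 'a" where "c k' = (if k' = k then 1 else 0)" for k'
  have "finsum_vec TYPE('a) N (\<lambda>k'. c k' \<cdot>\<^sub>v v k') {..<N} = 0\<^sub>v N"
  proof (rule eq_vecI)
    fix i assume "i < dim_vec (0\<^sub>v N)"
    then have i: "i < N" by simp
    have "(\<Sum>k'<N. c k' * v k' $ i) = (\<Sum>k'<N. if k' = k then v k' $ i else 0)"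
      by (intro sum.cong) (auto simp: c_def)
    also have "\<dots> = v k $ i" using k by simp
    finally have "(\<Sum>k'<N. c k' * v k' $ i) = v k $ i" .
    then show "finsum_vec TYPE('a) N (\<lambda>k'. c k' \<cdot>\<^sub>v v k') {..<N} $ i = 0\<^sub>v N $ i"
      using v(1) vk i by (simp add: index_finsum_smult_vec)
  qed (use v(1) finsum_vec_closed[of "\<lambda>k'. c k' \<cdot>\<^sub>v v k'" "{..<N}" N] in auto)
  then have "c k = 0" using v(2) k unfolding lin_indpt_family_def by blast
  then show False by (simp add: c_def)
qed

lemma lin_indpt_family_det:
  fixes v :: "nat \<Rightarrow> 'a :: field vec"
  assumes v: "\<forall>k<N. v k \<in> carrier_vec N" "lin_indpt_family N v"
  shows "det (mat N N (\<lambda>(i, k). v k $ i)) \<noteq> 0"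
proof
  let ?V = "mat N N (\<lambda>(i, k). v k $ i)"
  assume "det ?V = 0"
  then obtain c where c: "c \<in> carrier_vec N" "c \<noteq> 0\<^sub>v N" "?V *\<^sub>v c = 0\<^sub>v N"
    using det_0_iff_vec_prod_zero[of ?V N] by auto
  have "finsum_vec TYPE('a) N (\<lambda>k. c $ k \<cdot>\<^sub>v v k) {..<N} = ?V *\<^sub>v c"
  proof (rule eq_vecI)
    fix i assume "i < dim_vec (?V *\<^sub>v c)"
    then show "finsum_vec TYPE('a) N (\<lambda>k. c $ k \<cdot>\<^sub>v v k) {..<N} $ i = (?V *\<^sub>v c) $ i"
      using v(1) c(1)
      by (simp add: index_finsum_smult_vec) (simp add: scalar_prod_def lessThan_atLeast0 mult.commute)
  qed (use v(1) finsum_vec_closed[of "\<lambda>k. c $ k \<cdot>\<^sub>v v k" "{..<N}" N] in auto)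
  then have "\<forall>k<N. c $ k = 0" using v(2) c(3) unfolding lin_indpt_family_def by auto
  then show False using c(1,2) by (auto simp: vec_eq_iff)
qed

text \<open>The coefficients \<open>\<xi>\<^sub>k\<close> are the rows of \<open>V\<^sup>-\<^sup>1 Z\<close>, where \<open>V\<close> has the \<open>v\<^sub>k\<close> as
  columns and row \<open>i\<close> of \<open>Z\<close> is the \<open>i\<close>-th block of length \<open>n\<close> of \<open>z\<close>.\<close>

lemma kron_vec_expansion:
  fixes v :: "nat \<Rightarrow> 'a :: field vec"
  assumes v: "\<forall>k<N. v k \<in> carrier_vec N" "lin_indpt_family N v" and z: "z \<in> carrier_vec (N * n)"
  obtains \<xi> where "\<And>k. \<xi> k \<in> carrier_vec n"
    and "z = finsum_vec TYPE('a) (N * n) (\<lambda>k. kron_vec (v k) (\<xi> k)) {..<N}"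
proof -
  define V where "V = mat N N (\<lambda>(i, k). v k $ i)"
  have V: "V \<in> carrier_mat N N" by (simp add: V_def)
  obtain V' where V': "V' \<in> carrier_mat N N" "V * V' = 1\<^sub>m N"
    using det_non_zero_imp_unit[OF V lin_indpt_family_det[OF v, folded V_def]]
    unfolding Units_def by (auto simp: ring_mat_simps)
  define Z where "Z = mat N n (\<lambda>(i, a). z $ (i * n + a))"
  have Z: "Z \<in> carrier_mat N n" by (simp add: Z_def)
  define \<xi> where "\<xi> k = row (V' * Z) k" for k
  have \<xi>: "\<xi> k \<in> carrier_vec n" for k by (rule carrier_vecI) (use V' Z in \<open>simp add: \<xi>_def\<close>)
  have "z = finsum_vec TYPE('a) (N * n) (\<lambda>k. kron_vec (v k) (\<xi> k)) {..<N}"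
  proof (rule eq_vec_blocks[of _ N n])
    show "finsum_vec TYPE('a) (N * n) (\<lambda>k. kron_vec (v k) (\<xi> k)) {..<N} \<in> carrier_vec (N * n)"
      using v(1) \<xi> by (intro finsum_kron_vec_carrier) auto
    fix i a assume i: "i < N" and a: "a < n"
    have "z $ (i * n + a) = ((V * V') * Z) $$ (i, a)" using V' i a by (simp add: Z_def)
    also have "\<dots> = (V * (V' * Z)) $$ (i, a)" by (simp only: assoc_mult_mat[OF V V'(1) Z])
    also have "\<dots> = (\<Sum>k<N. v k $ i * \<xi> k $ a)"
      using V V' Z i a by (simp add: V_def \<xi>_def scalar_prod_def lessThan_atLeast0)
    also have "\<dots> = finsum_vec TYPE('a) (N * n) (\<lambda>k. kron_vec (v k) (\<xi> k)) {..<N} $ (i * n + a)"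
      using v(1) \<xi> i a by (subst index_finsum_kron_vec) auto
    finally show "z $ (i * n + a) = finsum_vec TYPE('a) (N * n) (\<lambda>k. kron_vec (v k) (\<xi> k)) {..<N} $ (i * n + a)" .
  qed (rule z)
  then show thesis using \<xi> that by blast
qed

lemma kron_vec_expansion_unique:
  fixes v :: "nat \<Rightarrow> 'a :: field vec"
  assumes v: "\<forall>k<N. v k \<in> carrier_vec N" "lin_indpt_family N v"
    and \<xi>: "\<And>k. k < N \<Longrightarrow> \<xi> k \<in> carrier_vec n" and \<eta>: "\<And>k. k < N \<Longrightarrow> \<eta> k \<in> carrier_vec n"
    and eq: "finsum_vec TYPE('a) (N * n) (\<lambda>k. kron_vec (v k) (\<xi> k)) {..<N}
      = finsum_vec TYPE('a) (N * n) (\<lambda>k. kron_vec (v k) (\<eta> k)) {..<N}"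
    and k: "k < N"
  shows "\<xi> k = \<eta> k"
proof (rule eq_vecI)
  show "dim_vec (\<xi> k) = dim_vec (\<eta> k)" using \<xi>[OF k] \<eta>[OF k] by simp
  fix a assume "a < dim_vec (\<eta> k)"
  then have a: "a < n" using \<eta>[OF k] by simp
  define c where "c k' = \<xi> k' $ a - \<eta> k' $ a" for k'
  have "finsum_vec TYPE('a) N (\<lambda>k'. c k' \<cdot>\<^sub>v v k') {..<N} = 0\<^sub>v N"
  proof (rule eq_vecI)
    fix i assume "i < dim_vec (0\<^sub>v N)"
    then have i: "i < N" by simp
    have "(\<Sum>k'<N. v k' $ i * \<xi> k' $ a)
        = finsum_vec TYPE('a) (N * n) (\<lambda>k. kron_vec (v k) (\<xi> k)) {..<N} $ (i * n + a)"
      using v(1) \<xi> i a by (intro index_finsum_kron_vec[symmetric]) auto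
    also have "\<dots> = (\<Sum>k'<N. v k' $ i * \<eta> k' $ a)"
      unfolding eq using v(1) \<eta> i a by (intro index_finsum_kron_vec) auto
    finally have "(\<Sum>k'<N. c k' * v k' $ i) = 0"
      by (simp add: c_def algebra_simps sum_subtractf)
    then show "finsum_vec TYPE('a) N (\<lambda>k'. c k' \<cdot>\<^sub>v v k') {..<N} $ i = 0\<^sub>v N $ i"
      using v(1) i by (simp add: index_finsum_smult_vec)
  qed (use v(1) finsum_vec_closed[of "\<lambda>k'. c k' \<cdot>\<^sub>v v k'" "{..<N}" N] in auto)
  then have "c k = 0" using v(2) k unfolding lin_indpt_family_def by blast
  then show "\<xi> k $ a = \<eta> k $ a" by (simp add: c_def)
qed

section \<open>The Hautus rank condition\<close>

lemma (in vec_space) rank_neq_if_left_null_vector: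
  assumes G: "G \<in> carrier_mat n s" and x: "x \<in> carrier_vec n" "x \<noteq> 0\<^sub>v n"
    and xG: "row_mult x G = 0\<^sub>v s"
  shows "rank G \<noteq> n"
proof
  assume rank: "rank G = n"
  obtain S where S: "maximal S (\<lambda>T. T \<subseteq> set (cols G) \<and> lin_indpt T)"
    using maximal_exists[of "\<lambda>T. T \<subseteq> set (cols G) \<and> lin_indpt T" "card (set (cols G))" "{}"]
    by (meson List.finite_set card_mono empty_iff empty_subsetI finite_lin_indpt2 rev_finite_subset)
  have S_cols: "S \<subseteq> set (cols G)" and S_indpt: "lin_indpt S" using S by (auto simp: maximal_def)
  obtain L where L: "set L = S" "distinct L"
    using finite_distinct_list[OF finite_subset[OF S_cols List.finite_set]] by blast
  have L_length: "length L = n"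
    using rank_card_indpt[OF G S] rank distinct_card[OF L(2)] L(1) by simp
  have L_carrier: "set L \<subseteq> carrier_vec n" using S_cols L(1) G cols_dim by blast
  define Sq where "Sq = mat_of_cols n L"
  have Sq: "Sq \<in> carrier_mat n n" using mat_of_cols_carrier(1)[of n L] L_length by (simp add: Sq_def)
  have cols_Sq: "cols Sq = L" by (simp add: Sq_def cols_mat_of_cols[OF L_carrier])
  have "rank Sq = n" using lin_indpt_full_rank[OF Sq] cols_Sq L S_indpt by simp
  then have "det Sq \<noteq> 0" using det_rank_iff[OF Sq] by simp
  have orth: "x \<bullet> u = 0" if u: "u \<in> set (cols G)" for u
  proof -
    obtain j where j: "j < dim_col G" "u = col G j" using u by (auto simp: cols_def)
    then have "x \<bullet> u = row_mult x G $ j" by (simp add: row_mult_def)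
    then show ?thesis using xG j G by simp
  qed
  have "row_mult x Sq = 0\<^sub>v n"
  proof (rule eq_vecI)
    fix i assume "i < dim_vec (0\<^sub>v n)"
    then have i: "i < n" by simp
    have "col Sq i = L ! i" using cols_nth[of i Sq] cols_Sq Sq i by simp
    also have "\<dots> \<in> set (cols G)" using L(1) L_length S_cols i by auto
    finally show "row_mult x Sq $ i = 0\<^sub>v n $ i" using orth i Sq by (simp add: row_mult_def)
  qed (use Sq in simp)
  then have "Sq\<^sup>T *\<^sub>v x = 0\<^sub>v n" using row_mult_eq_transpose[of x Sq] x Sq by simp
  then have "det Sq\<^sup>T = 0" using det_0_iff_vec_prod_zero[of "Sq\<^sup>T" n] x Sq by auto
  then show False using \<open>det Sq \<noteq> 0\<close> det_transpose[OF Sq] by simp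
qed

lemma hcat_carrier_mat:
  "F \<in> carrier_mat q c\<^sub>1 \<Longrightarrow> G \<in> carrier_mat q c\<^sub>2 \<Longrightarrow> hcat F G \<in> carrier_mat q (c\<^sub>1 + c\<^sub>2)"
  unfolding hcat_def carrier_mat_def by auto

lemma row_mult_hcat_zero:
  fixes F G :: "'a :: comm_ring_1 mat"
  assumes F: "F \<in> carrier_mat q c\<^sub>1" and G: "G \<in> carrier_mat q c\<^sub>2" and x: "x \<in> carrier_vec q"
    and "row_mult x F = 0\<^sub>v c\<^sub>1" and "row_mult x G = 0\<^sub>v c\<^sub>2"
  shows "row_mult x (hcat F G) = 0\<^sub>v (c\<^sub>1 + c\<^sub>2)"
proof (rule eq_vecI)
  fix j assume "j < dim_vec (0\<^sub>v (c\<^sub>1 + c\<^sub>2))"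
  then have j: "j < c\<^sub>1 + c\<^sub>2" by simp
  have "row_mult x (hcat F G) $ j = (\<Sum>t<q. x $ t * hcat F G $$ (t, j))"
    using F G x j by (simp add: index_row_mult hcat_def)
  also have "\<dots> = (if j < c\<^sub>1 then row_mult x F $ j else row_mult x G $ (j - c\<^sub>1))"
    using F G x j by (auto simp: index_row_mult hcat_def intro!: sum.cong)
  also have "\<dots> = 0" using assms j by simp
  finally show "row_mult x (hcat F G) $ j = 0\<^sub>v (c\<^sub>1 + c\<^sub>2) $ j" using j by simp
qed (use F G in \<open>simp add: hcat_def\<close>)

lemma ctrb_pair_left_eigenvector:
  assumes ctrb: "ctrb_pair F G" and F: "F \<in> carrier_mat q q" and G: "G \<in> carrier_mat q c"
    and x: "x \<in> carrier_vec q" "x \<noteq> 0\<^sub>v q" and xF: "row_mult x F = \<theta> \<cdot>\<^sub>v x"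
  shows "row_mult x G \<noteq> 0\<^sub>v c"
proof
  assume xG: "row_mult x G = 0\<^sub>v c"
  have M: "hcat (\<theta> \<cdot>\<^sub>m 1\<^sub>m q - F) G \<in> carrier_mat q (q + c)"
    using F G by (intro hcat_carrier_mat) auto
  have "row_mult x (\<theta> \<cdot>\<^sub>m 1\<^sub>m q - F) = \<theta> \<cdot>\<^sub>v x - \<theta> \<cdot>\<^sub>v x"
    using F x xF by (simp add: row_mult_minus_mat[of _ q q] row_mult_smult_mat[OF one_carrier_mat])
  also have "\<dots> = 0\<^sub>v q" using x by (intro eq_vecI) auto
  finally have "row_mult x (hcat (\<theta> \<cdot>\<^sub>m 1\<^sub>m q - F) G) = 0\<^sub>v (q + c)"
    using F G x xG by (intro row_mult_hcat_zero) auto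
  then have "vec_space.rank q (hcat (\<theta> \<cdot>\<^sub>m 1\<^sub>m q - F) G) \<noteq> q"
    by (rule vec_space.rank_neq_if_left_null_vector[OF M x])
  then show False using ctrb F unfolding ctrb_pair_def by auto
qed

lemma left_eigenvector_imp_eigenvalue:
  fixes E :: "'a :: field mat"
  assumes E: "E \<in> carrier_mat q q" and x: "x \<in> carrier_vec q" "x \<noteq> 0\<^sub>v q"
    and xE: "row_mult x E = \<theta> \<cdot>\<^sub>v x"
  shows "eigenvalue E \<theta>"
proof -
  have M: "char_matrix E \<theta> \<in> carrier_mat q q" using E by simp
  have "row_mult x (char_matrix E \<theta>) = \<theta> \<cdot>\<^sub>v x + (- \<theta>) \<cdot>\<^sub>v x"
    using E x xE by (simp add: char_matrix_def row_mult_add_mat row_mult_smult_mat[OF one_carrier_mat])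
  also have "\<dots> = 0\<^sub>v q" using x by (intro eq_vecI) (auto simp: algebra_simps)
  finally have "row_mult x (char_matrix E \<theta>) = 0\<^sub>v q" .
  then have "(char_matrix E \<theta>)\<^sup>T *\<^sub>v x = 0\<^sub>v q" using row_mult_eq_transpose[of x] M x by simp
  then have "det (char_matrix E \<theta>)\<^sup>T = 0"
    using det_0_iff_vec_prod_zero[of "(char_matrix E \<theta>)\<^sup>T" q] M x by auto
  then show ?thesis using eigenvalue_det[OF E] det_transpose[OF M] by simp
qed

section \<open>Eigenvectors in Krylov spaces\<close>

definition poly_mat_vec :: "'a :: comm_ring_1 mat \<Rightarrow> 'a poly \<Rightarrow> 'a vec \<Rightarrow> 'a vec" where
  "poly_mat_vec F q y = vec (dim_vec y) (\<lambda>t. \<Sum>i\<le>degree q. coeff q i * ((mult_mat_vec F ^^ i) y) $ t)"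

lemma poly_mat_vec_carrier: "y \<in> carrier_vec M \<Longrightarrow> poly_mat_vec F q y \<in> carrier_vec M"
  unfolding poly_mat_vec_def by (metis carrier_vecD vec_carrier)

lemma krylov_carrier:
  "F \<in> carrier_mat M M \<Longrightarrow> y \<in> carrier_vec M \<Longrightarrow> (mult_mat_vec F ^^ i) y \<in> carrier_vec M"
  by (induction i) (simp_all add: mult_mat_vec_carrier)

lemma mult_mat_vec_lincomb:
  fixes A :: "'a :: comm_ring_1 mat"
  assumes A: "A \<in> carrier_mat nr nc" and I: "finite I" and w: "\<And>i. i \<in> I \<Longrightarrow> w i \<in> carrier_vec nc"
  shows "A *\<^sub>v vec nc (\<lambda>t. \<Sum>i\<in>I. c i * w i $ t) = vec nr (\<lambda>s. \<Sum>i\<in>I. c i * (A *\<^sub>v w i) $ s)"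
proof (rule eq_vecI)
  fix s assume "s < dim_vec (vec nr (\<lambda>s. \<Sum>i\<in>I. c i * (A *\<^sub>v w i) $ s))"
  then have s: "s < nr" by simp
  have "(A *\<^sub>v vec nc (\<lambda>t. \<Sum>i\<in>I. c i * w i $ t)) $ s = (\<Sum>t<nc. \<Sum>i\<in>I. A $$ (s, t) * (c i * w i $ t))"
    using A s by (simp add: scalar_prod_def lessThan_atLeast0 sum_distrib_left)
  also have "\<dots> = (\<Sum>i\<in>I. \<Sum>t<nc. c i * (A $$ (s, t) * w i $ t))"
    by (subst sum.swap) (simp add: mult.left_commute)
  also have "\<dots> = (\<Sum>i\<in>I. c i * (\<Sum>t<nc. A $$ (s, t) * w i $ t))"
    by (simp add: sum_distrib_left)
  also have "\<dots> = (\<Sum>i\<in>I. c i * (A *\<^sub>v w i) $ s)"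
  proof (rule sum.cong[OF refl])
    fix i assume "i \<in> I"
    then have "dim_vec (w i) = nc" using w by auto
    then show "c i * (\<Sum>t<nc. A $$ (s, t) * w i $ t) = c i * (A *\<^sub>v w i) $ s"
      using A s by (simp add: scalar_prod_def lessThan_atLeast0)
  qed
  finally show "(A *\<^sub>v vec nc (\<lambda>t. \<Sum>i\<in>I. c i * w i $ t)) $ s = vec nr (\<lambda>s. \<Sum>i\<in>I. c i * (A *\<^sub>v w i) $ s) $ s"
    using s by simp
qed (use A in simp)

lemma poly_mat_vec_altdef:
  assumes "degree q \<le> d"
  shows "poly_mat_vec F q y = vec (dim_vec y) (\<lambda>t. \<Sum>i\<le>d. coeff q i * ((mult_mat_vec F ^^ i) y) $ t)"
proof (rule eq_vecI)
  fix t assume t: "t < dim_vec (vec (dim_vec y) (\<lambda>t. \<Sum>i\<le>d. coeff q i * ((mult_mat_vec F ^^ i) y) $ t))"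
  have "(\<Sum>i\<le>degree q. coeff q i * ((mult_mat_vec F ^^ i) y) $ t)
      = (\<Sum>i\<le>d. coeff q i * ((mult_mat_vec F ^^ i) y) $ t)"
    using assms by (intro sum.mono_neutral_left) (auto simp: coeff_eq_0)
  then show "poly_mat_vec F q y $ t
      = vec (dim_vec y) (\<lambda>t. \<Sum>i\<le>d. coeff q i * ((mult_mat_vec F ^^ i) y) $ t) $ t"
    using t by (simp add: poly_mat_vec_def)
qed (simp add: poly_mat_vec_def)

lemma poly_mat_vec_one [simp]: "poly_mat_vec F 1 y = y"
  by (intro eq_vecI) (simp_all add: poly_mat_vec_def)

lemma poly_mat_vec_smult: "poly_mat_vec F (Polynomial.smult a q) y = a \<cdot>\<^sub>v poly_mat_vec F q y"
  using poly_mat_vec_altdef[of "Polynomial.smult a q" "degree q" F y] degree_smult_le[of a q]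
  by (intro eq_vecI) (auto simp: poly_mat_vec_def sum_distrib_left mult.assoc)

lemma poly_mat_vec_add: "poly_mat_vec F (p + q) y = poly_mat_vec F p y + poly_mat_vec F q y"
proof -
  let ?d = "max (degree p) (degree q)"
  have "degree (p + q) \<le> ?d" by (rule degree_add_le) auto
  then show ?thesis
    by (simp add: poly_mat_vec_altdef[of _ ?d]) (intro eq_vecI; simp add: distrib_right sum.distrib)
qed

lemma poly_mat_vec_pCons_0:
  assumes F: "F \<in> carrier_mat M M" and y: "y \<in> carrier_vec M"
  shows "poly_mat_vec F (pCons 0 q) y = F *\<^sub>v poly_mat_vec F q y"
proof -
  let ?w = "\<lambda>i. (mult_mat_vec F ^^ i) y"
  have w: "?w i \<in> carrier_vec M" for i using krylov_carrier[OF F y] .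
  have "poly_mat_vec F (pCons 0 q) y = vec M (\<lambda>t. \<Sum>i\<le>Suc (degree q). coeff (pCons 0 q) i * ?w i $ t)"
    using y by (subst poly_mat_vec_altdef[of _ "Suc (degree q)"]) (auto simp: degree_pCons_le)
  also have "\<dots> = vec M (\<lambda>t. \<Sum>i\<le>degree q. coeff q i * ?w (Suc i) $ t)"
    by (simp add: sum.atMost_Suc_shift del: sum.atMost_Suc)
  also have "\<dots> = F *\<^sub>v vec M (\<lambda>t. \<Sum>i\<le>degree q. coeff q i * ?w i $ t)"
    using F w by (subst mult_mat_vec_lincomb) auto
  finally show ?thesis using y by (simp add: poly_mat_vec_def)
qed

lemma poly_mat_vec_linear_factor:
  assumes F: "F \<in> carrier_mat M M" and y: "y \<in> carrier_vec M"
  shows "poly_mat_vec F (q * [:-r, 1:]) y = F *\<^sub>v poly_mat_vec F q y - r \<cdot>\<^sub>v poly_mat_vec F q y"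
proof -
  have "q * [:-r, 1:] = Polynomial.smult (-r) q + pCons 0 q" by simp
  then have "poly_mat_vec F (q * [:-r, 1:]) y = (-r) \<cdot>\<^sub>v poly_mat_vec F q y + F *\<^sub>v poly_mat_vec F q y"
    by (simp only: poly_mat_vec_add poly_mat_vec_smult poly_mat_vec_pCons_0[OF F y])
  also have "\<dots> = F *\<^sub>v poly_mat_vec F q y - r \<cdot>\<^sub>v poly_mat_vec F q y"
    using F poly_mat_vec_carrier[OF y, of F q] by (intro eq_vecI) auto
  finally show ?thesis .
qed

lemma poly_mat_vec_annihilated:
  assumes F: "F \<in> carrier_mat M M" and P: "P \<in> carrier_mat Q M" and y: "y \<in> carrier_vec M"
    and ann: "\<And>i. i \<le> degree q \<Longrightarrow> P *\<^sub>v (mult_mat_vec F ^^ i) y = 0\<^sub>v Q"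
  shows "P *\<^sub>v poly_mat_vec F q y = 0\<^sub>v Q"
  using y P ann krylov_carrier[OF F y]
  by (simp add: poly_mat_vec_def mult_mat_vec_lincomb[OF P]) (intro eq_vecI; simp)

lemma wide_mat_kernel_nonzero:
  fixes A :: "'a :: idom mat"
  assumes A: "A \<in> carrier_mat M (Suc M)"
  obtains c where "c \<in> carrier_vec (Suc M)" "c \<noteq> 0\<^sub>v (Suc M)" "A *\<^sub>v c = 0\<^sub>v M"
proof -
  define A' where "A' = mat\<^sub>r (Suc M) (Suc M) (\<lambda>i. if i = M then 0\<^sub>v (Suc M) else row A i)"
  have A': "A' \<in> carrier_mat (Suc M) (Suc M)" by (simp add: A'_def)
  have "det A' = 0" unfolding A'_def using A by (intro det_row_0) (auto intro: carrier_vecI)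
  then obtain c where c: "c \<in> carrier_vec (Suc M)" "c \<noteq> 0\<^sub>v (Suc M)" "A' *\<^sub>v c = 0\<^sub>v (Suc M)"
    using det_0_iff_vec_prod_zero[OF A'] by auto
  have "A *\<^sub>v c = 0\<^sub>v M"
  proof (rule eq_vecI)
    fix t assume "t < dim_vec (0\<^sub>v M)"
    then have t: "t < M" by simp
    have "(A *\<^sub>v c) $ t = (A' *\<^sub>v c) $ t" using A t by (simp add: A'_def)
    then show "(A *\<^sub>v c) $ t = 0\<^sub>v M $ t" using c(3) t by simp
  qed (use A in simp)
  then show thesis using that c by blast
qed

lemma krylov_dependence:
  fixes F :: "'a :: idom mat"
  assumes F: "F \<in> carrier_mat M M" and y: "y \<in> carrier_vec M"
  obtains q where "q \<noteq> 0" "degree q \<le> M" "poly_mat_vec F q y = 0\<^sub>v M"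
proof -
  let ?w = "\<lambda>i. (mult_mat_vec F ^^ i) y"
  obtain c where c: "c \<in> carrier_vec (Suc M)" "c \<noteq> 0\<^sub>v (Suc M)"
    and Kc: "mat M (Suc M) (\<lambda>(t, i). ?w i $ t) *\<^sub>v c = 0\<^sub>v M"
    by (rule wide_mat_kernel_nonzero[of "mat M (Suc M) (\<lambda>(t, i). ?w i $ t)"]) auto
  define q where "q = (\<Sum>i\<le>M. monom (c $ i) i)"
  have coeff_q: "coeff q i = (if i \<le> M then c $ i else 0)" for i
    by (simp add: q_def coeff_sum coeff_monom)
  have deg: "degree q \<le> M" by (rule degree_le) (simp add: coeff_q)
  have "q \<noteq> 0"
  proof
    assume "q = 0"
    then have "c $ i = 0" if "i < Suc M" for i using coeff_q[of i] that by simp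
    then show False using c by (auto simp: vec_eq_iff)
  qed
  moreover have "poly_mat_vec F q y = 0\<^sub>v M"
  proof (rule eq_vecI)
    fix t assume "t < dim_vec (0\<^sub>v M)"
    then have t: "t < M" by simp
    have "poly_mat_vec F q y $ t = (\<Sum>i\<le>M. c $ i * ?w i $ t)"
      using y t by (simp add: poly_mat_vec_altdef[OF deg] coeff_q)
    also have "\<dots> = (mat M (Suc M) (\<lambda>(t, i). ?w i $ t) *\<^sub>v c) $ t"
      using c t
      by (simp add: scalar_prod_def atLeast0AtMost lessThan_Suc_atMost[symmetric] lessThan_atLeast0 mult.commute)
    finally show "poly_mat_vec F q y $ t = 0\<^sub>v M $ t" using Kc t by simp
  qed (use y in \<open>simp add: poly_mat_vec_def\<close>)
  ultimately show thesis using that deg by blast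
qed

lemma complex_poly_linear_factor:
  fixes q :: "complex poly"
  assumes "degree q \<noteq> 0"
  obtains r q' where "q = q' * [:-r, 1:]" "q' \<noteq> 0" "degree q' < degree q"
proof -
  have "\<not> constant (poly q)" using assms by (simp add: constant_degree)
  then obtain r where "poly q r = 0" using fundamental_theorem_of_algebra by blast
  then have "[:-r, 1:] dvd q" by (simp add: poly_eq_0_iff_dvd)
  then obtain q' where "q = [:-r, 1:] * q'" by (rule dvdE)
  then have q: "q = q' * [:-r, 1:]" by (simp only: mult.commute)
  moreover have "q' \<noteq> 0" using assms q by auto
  moreover from this have "degree q = degree q' + degree [:-r, 1:]"
    unfolding q by (rule degree_mult_eq) simp
  ultimately show thesis using that by simp
qed

text \<open>Split off one linear factor \<open>x - r\<close> of \<open>q\<close>: either the cofactor already annihilates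
  \<open>y\<close>, and we recurse, or its image of \<open>y\<close> is an eigenvector of \<open>F\<close> for \<open>r\<close>.\<close>

lemma krylov_eigenvector_poly:
  fixes F :: "complex mat"
  assumes F: "F \<in> carrier_mat M M" and y: "y \<in> carrier_vec M" "y \<noteq> 0\<^sub>v M"
  shows "q \<noteq> 0 \<Longrightarrow> poly_mat_vec F q y = 0\<^sub>v M \<Longrightarrow> \<exists>g \<theta>. degree g < degree q \<and>
    poly_mat_vec F g y \<noteq> 0\<^sub>v M \<and> F *\<^sub>v poly_mat_vec F g y = \<theta> \<cdot>\<^sub>v poly_mat_vec F g y"
proof (induction "degree q" arbitrary: q rule: less_induct)
  case less
  show ?case
  proof (cases "degree q = 0")
    case True
    then obtain a where q: "q = [:a:]" by (rule degree_eq_zeroE)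
    then have "a \<noteq> 0" using less.prems(1) by simp
    then have "y = inverse a \<cdot>\<^sub>v poly_mat_vec F q y"
      unfolding q poly_mat_vec_smult[of F a 1 y, simplified] by (simp add: smult_smult_assoc)
    also have "\<dots> = 0\<^sub>v M" using less.prems(2) by (intro eq_vecI) simp_all
    finally show ?thesis using y(2) by contradiction
  next
    case False
    then obtain r q' where q: "q = q' * [:-r, 1:]" and "q' \<noteq> 0" and deg: "degree q' < degree q"
      by (rule complex_poly_linear_factor)
    have "F *\<^sub>v poly_mat_vec F q' y - r \<cdot>\<^sub>v poly_mat_vec F q' y = 0\<^sub>v M"
      using less.prems(2) unfolding q by (simp only: poly_mat_vec_linear_factor[OF F y(1)])
    then have eigen: "F *\<^sub>v poly_mat_vec F q' y = r \<cdot>\<^sub>v poly_mat_vec F q' y"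
      by (rule eq_of_minus_eq_zero_vec[rotated 2])
        (use F poly_mat_vec_carrier[OF y(1), of F q'] in simp_all)
    show ?thesis
    proof (cases "poly_mat_vec F q' y = 0\<^sub>v M")
      case True
      then obtain g \<theta> where "degree g < degree q'" "poly_mat_vec F g y \<noteq> 0\<^sub>v M"
        "F *\<^sub>v poly_mat_vec F g y = \<theta> \<cdot>\<^sub>v poly_mat_vec F g y"
        using less.hyps[OF deg \<open>q' \<noteq> 0\<close>] by auto
      then show ?thesis using deg by (intro exI[of _ g] exI[of _ \<theta>]) simp
    next
      case False
      with eigen deg show ?thesis by blast
    qed
  qed
qed

lemma krylov_eigenvector:
  fixes F P :: "complex mat"
  assumes F: "F \<in> carrier_mat M M" and P: "P \<in> carrier_mat Q M"
    and y: "y \<in> carrier_vec M" "y \<noteq> 0\<^sub>v M"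
    and ann: "\<And>j. j < M \<Longrightarrow> P *\<^sub>v (mult_mat_vec F ^^ j) y = 0\<^sub>v Q"
  obtains z \<theta> where "z \<in> carrier_vec M" "z \<noteq> 0\<^sub>v M" "F *\<^sub>v z = \<theta> \<cdot>\<^sub>v z" "P *\<^sub>v z = 0\<^sub>v Q"
proof -
  obtain q where q: "q \<noteq> 0" "degree q \<le> M" "poly_mat_vec F q y = 0\<^sub>v M"
    using krylov_dependence[OF F y(1)] by blast
  then obtain g \<theta> where g: "degree g < degree q" "poly_mat_vec F g y \<noteq> 0\<^sub>v M"
    "F *\<^sub>v poly_mat_vec F g y = \<theta> \<cdot>\<^sub>v poly_mat_vec F g y"
    using krylov_eigenvector_poly[OF F y] by blast
  have "P *\<^sub>v poly_mat_vec F g y = 0\<^sub>v Q"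
    using g(1) q(2) by (intro poly_mat_vec_annihilated[OF F P y(1)] ann) simp
  moreover have "poly_mat_vec F g y \<in> carrier_vec M" using poly_mat_vec_carrier[OF y(1)] .
  ultimately show thesis using that g by blast
qed

lemma (in semiring_hom) krylov_hom:
  assumes "A \<in> carrier_mat M M" "v \<in> carrier_vec M"
  shows "(mult_mat_vec (mat\<^sub>h A) ^^ j) (vec\<^sub>h v) = vec\<^sub>h ((mult_mat_vec A ^^ j) v)"
proof (induction j)
  case (Suc j)
  then show ?case using assms mult_mat_vec_hom[OF assms(1) krylov_carrier[OF assms]] by simp
qed simp

section \<open>The controllability Gramian\<close>

text \<open>\<open>ctrb_gramian \<Phi> \<Psi> k = (\<Sum>j<k. \<Phi>\<^sup>j \<Psi> \<Psi>\<^sup>T (\<Phi>\<^sup>T)\<^sup>j)\<close>.\<close>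

fun ctrb_gramian :: "'a :: comm_ring_1 mat \<Rightarrow> 'a mat \<Rightarrow> nat \<Rightarrow> 'a mat" where
  "ctrb_gramian \<Phi> \<Psi> 0 = 0\<^sub>m (dim_row \<Phi>) (dim_row \<Phi>)"
| "ctrb_gramian \<Phi> \<Psi> (Suc k) = \<Phi> * ctrb_gramian \<Phi> \<Psi> k * \<Phi>\<^sup>T + \<Psi> * \<Psi>\<^sup>T"

lemma ctrb_gramian_carrier:
  "\<Phi> \<in> carrier_mat M M \<Longrightarrow> \<Psi> \<in> carrier_mat M P \<Longrightarrow> ctrb_gramian \<Phi> \<Psi> k \<in> carrier_mat M M"
  by (induction k) auto

lemma ctrb_gramian_Suc_mult_vec:
  assumes \<Phi>: "\<Phi> \<in> carrier_mat M M" and \<Psi>: "\<Psi> \<in> carrier_mat M P" and x: "x \<in> carrier_vec M"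
  shows "ctrb_gramian \<Phi> \<Psi> (Suc k) *\<^sub>v x
    = \<Phi> *\<^sub>v (ctrb_gramian \<Phi> \<Psi> k *\<^sub>v (\<Phi>\<^sup>T *\<^sub>v x)) + \<Psi> *\<^sub>v (\<Psi>\<^sup>T *\<^sub>v x)"
  using ctrb_gramian_carrier[OF \<Phi> \<Psi>, of k] \<Phi> \<Psi> x
  by (simp add: add_mult_distrib_mat_vec[of _ M M] assoc_mult_mat_vec[of _ M M _ M])

lemma ctrb_gramian_quadratic_form:
  fixes \<Phi> \<Psi> :: "'a :: comm_ring_1 mat"
  assumes \<Phi>: "\<Phi> \<in> carrier_mat M M" and \<Psi>: "\<Psi> \<in> carrier_mat M P"
  shows "x \<in> carrier_vec M \<Longrightarrow> x \<bullet> (ctrb_gramian \<Phi> \<Psi> k *\<^sub>v x)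
    = (\<Sum>j<k. let u = \<Psi>\<^sup>T *\<^sub>v (mult_mat_vec \<Phi>\<^sup>T ^^ j) x in u \<bullet> u)"
proof (induction k arbitrary: x)
  case 0
  then show ?case using \<Phi> by (simp add: zero_mat_mult_vec scalar_prod_right_zero)
next
  case (Suc k)
  have G: "ctrb_gramian \<Phi> \<Psi> k \<in> carrier_mat M M" by (rule ctrb_gramian_carrier[OF \<Phi> \<Psi>])
  have x: "x \<in> carrier_vec M" and x': "\<Phi>\<^sup>T *\<^sub>v x \<in> carrier_vec M" using Suc.prems \<Phi> by auto
  have "x \<bullet> (ctrb_gramian \<Phi> \<Psi> (Suc k) *\<^sub>v x)
      = x \<bullet> (\<Phi> *\<^sub>v (ctrb_gramian \<Phi> \<Psi> k *\<^sub>v (\<Phi>\<^sup>T *\<^sub>v x))) + x \<bullet> (\<Psi> *\<^sub>v (\<Psi>\<^sup>T *\<^sub>v x))"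
    using \<Phi> \<Psi> G x x'
    by (subst ctrb_gramian_Suc_mult_vec[OF \<Phi> \<Psi> x]) (simp add: scalar_prod_add_distrib[of _ M])
  also have "\<dots> = (\<Phi>\<^sup>T *\<^sub>v x) \<bullet> (ctrb_gramian \<Phi> \<Psi> k *\<^sub>v (\<Phi>\<^sup>T *\<^sub>v x)) + (\<Psi>\<^sup>T *\<^sub>v x) \<bullet> (\<Psi>\<^sup>T *\<^sub>v x)"
    using \<Phi> \<Psi> G x x' by (simp add: transpose_vec_mult_scalar[of _ M M] transpose_vec_mult_scalar[of _ M P])
  also have "\<dots> = (\<Sum>j<Suc k. let u = \<Psi>\<^sup>T *\<^sub>v (mult_mat_vec \<Phi>\<^sup>T ^^ j) x in u \<bullet> u)"
    unfolding Suc.IH[OF x'] sum.lessThan_Suc_shift by (simp add: funpow_swap1 Let_def add.commute)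
  finally show ?case .
qed

lemma real_scalar_prod_self_nonneg: "(x :: real vec) \<bullet> x \<ge> 0"
  by (auto simp: scalar_prod_def intro!: sum_nonneg)

lemma real_scalar_prod_self_eq_0:
  fixes x :: "real vec"
  assumes x: "x \<in> carrier_vec n"
  shows "x \<bullet> x = 0 \<longleftrightarrow> x = 0\<^sub>v n"
proof
  assume "x \<bullet> x = 0"
  then have "\<forall>i\<in>{0..<n}. x $ i * x $ i = 0"
    using x by (subst sum_nonneg_eq_0_iff[symmetric]) (auto simp: scalar_prod_def)
  then show "x = 0\<^sub>v n" using x by (intro eq_vecI) auto
qed (use x in simp)

lemma ctrb_gramian_null_vector:
  fixes \<Phi> \<Psi> :: "real mat"
  assumes \<Phi>: "\<Phi> \<in> carrier_mat M M" and \<Psi>: "\<Psi> \<in> carrier_mat M P" and x: "x \<in> carrier_vec M"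
    and null: "ctrb_gramian \<Phi> \<Psi> k *\<^sub>v x = 0\<^sub>v M" and j: "j < k"
  shows "\<Psi>\<^sup>T *\<^sub>v (mult_mat_vec \<Phi>\<^sup>T ^^ j) x = 0\<^sub>v P"
proof -
  let ?u = "\<lambda>j. \<Psi>\<^sup>T *\<^sub>v (mult_mat_vec \<Phi>\<^sup>T ^^ j) x"
  have u: "?u j \<in> carrier_vec P" for j using krylov_carrier[of "\<Phi>\<^sup>T" M x j] \<Phi> \<Psi> x by simp
  have "(\<Sum>j<k. ?u j \<bullet> ?u j) = 0"
    using ctrb_gramian_quadratic_form[OF \<Phi> \<Psi> x, of k] null scalar_prod_right_zero[OF x]
    by (simp add: Let_def)
  then have "?u j \<bullet> ?u j = 0"
    using j by (simp add: sum_nonneg_eq_0_iff real_scalar_prod_self_nonneg)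
  then show ?thesis using real_scalar_prod_self_eq_0[OF u] by simp
qed

lemma traj_carrier:
  assumes "\<Phi> \<in> carrier_mat M M" "\<Psi> \<in> carrier_mat M P" "X0 \<in> carrier_vec M" "\<And>k. U k \<in> carrier_vec P"
  shows "traj \<Phi> \<Psi> X0 U k \<in> carrier_vec M"
  using assms by (induction k) auto

lemma traj_cong: "(\<And>j. j < k \<Longrightarrow> U j = U' j) \<Longrightarrow> traj \<Phi> \<Psi> X0 U k = traj \<Phi> \<Psi> X0 U' k"
  by (induction k) auto

lemma traj_superposition:
  assumes \<Phi>: "\<Phi> \<in> carrier_mat M M" and \<Psi>: "\<Psi> \<in> carrier_mat M P" and X0: "X0 \<in> carrier_vec M"
    and U: "\<And>k. U k \<in> carrier_vec P"
  shows "traj \<Phi> \<Psi> X0 U k = (mult_mat_vec \<Phi> ^^ k) X0 + traj \<Phi> \<Psi> (0\<^sub>v M) U k"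
proof (induction k)
  case (Suc k)
  have "(mult_mat_vec \<Phi> ^^ k) X0 \<in> carrier_vec M" by (rule krylov_carrier[OF \<Phi> X0])
  moreover have "traj \<Phi> \<Psi> (0\<^sub>v M) U k \<in> carrier_vec M" using traj_carrier[OF \<Phi> \<Psi> _ U] by simp
  ultimately show ?case
    using Suc \<Phi> \<Psi> U by (simp add: mult_add_distrib_mat_vec[OF \<Phi>] assoc_add_vec[of _ M])
qed (use X0 in simp)

lemma traj_gramian_input:
  assumes \<Phi>: "\<Phi> \<in> carrier_mat M M" and \<Psi>: "\<Psi> \<in> carrier_mat M P"
  shows "w \<in> carrier_vec M \<Longrightarrow>
    traj \<Phi> \<Psi> (0\<^sub>v M) (\<lambda>j. \<Psi>\<^sup>T *\<^sub>v (mult_mat_vec \<Phi>\<^sup>T ^^ (k - 1 - j)) w) k = ctrb_gramian \<Phi> \<Psi> k *\<^sub>v w"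
proof (induction k arbitrary: w)
  case 0
  then show ?case using \<Phi> by (intro eq_vecI) (auto simp: scalar_prod_def)
next
  case (Suc k)
  have w': "\<Phi>\<^sup>T *\<^sub>v w \<in> carrier_vec M" using \<Phi> Suc.prems by simp
  have "traj \<Phi> \<Psi> (0\<^sub>v M) (\<lambda>j. \<Psi>\<^sup>T *\<^sub>v (mult_mat_vec \<Phi>\<^sup>T ^^ (Suc k - 1 - j)) w) k
      = traj \<Phi> \<Psi> (0\<^sub>v M) (\<lambda>j. \<Psi>\<^sup>T *\<^sub>v (mult_mat_vec \<Phi>\<^sup>T ^^ (k - 1 - j)) (\<Phi>\<^sup>T *\<^sub>v w)) k"
  proof (rule traj_cong)
    fix j assume "j < k"
    then have "Suc k - 1 - j = Suc (k - 1 - j)" by simp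
    then show "\<Psi>\<^sup>T *\<^sub>v (mult_mat_vec \<Phi>\<^sup>T ^^ (Suc k - 1 - j)) w
        = \<Psi>\<^sup>T *\<^sub>v (mult_mat_vec \<Phi>\<^sup>T ^^ (k - 1 - j)) (\<Phi>\<^sup>T *\<^sub>v w)"
      by (simp only: funpow_Suc_right o_apply)
  qed
  also have "\<dots> = ctrb_gramian \<Phi> \<Psi> k *\<^sub>v (\<Phi>\<^sup>T *\<^sub>v w)" by (rule Suc.IH[OF w'])
  finally show ?case
    using \<Phi> \<Psi> Suc.prems by (simp add: ctrb_gramian_Suc_mult_vec del: ctrb_gramian.simps(2))
qed

lemma ds_controllable_if_gramian_invertible:
  fixes \<Phi> \<Psi> :: "real mat"
  assumes \<Phi>: "\<Phi> \<in> carrier_mat M M" and \<Psi>: "\<Psi> \<in> carrier_mat M P"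
    and det: "det (ctrb_gramian \<Phi> \<Psi> k) \<noteq> 0"
  shows "ds_controllable \<Phi> \<Psi>"
  unfolding ds_controllable_def
proof (intro ballI)
  fix X0 :: "real vec" assume "X0 \<in> carrier_vec (dim_row \<Phi>)"
  then have X0: "X0 \<in> carrier_vec M" using \<Phi> by simp
  have G: "ctrb_gramian \<Phi> \<Psi> k \<in> carrier_mat M M" by (rule ctrb_gramian_carrier[OF \<Phi> \<Psi>])
  obtain G' where G': "G' \<in> carrier_mat M M" "ctrb_gramian \<Phi> \<Psi> k * G' = 1\<^sub>m M"
    using det_non_zero_imp_unit[OF G det] unfolding Units_def by (auto simp: ring_mat_simps)
  define X where "X = (mult_mat_vec \<Phi> ^^ k) X0"
  have X: "X \<in> carrier_vec M" unfolding X_def by (rule krylov_carrier[OF \<Phi> X0])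
  define w where "w = G' *\<^sub>v (- X)"
  have w: "w \<in> carrier_vec M" using G' X by (simp add: w_def)
  define U where "U j = \<Psi>\<^sup>T *\<^sub>v (mult_mat_vec \<Phi>\<^sup>T ^^ (k - 1 - j)) w" for j
  have U: "U j \<in> carrier_vec P" for j by (rule carrier_vecI) (use \<Psi> in \<open>simp add: U_def\<close>)
  have "traj \<Phi> \<Psi> X0 U k = X + traj \<Phi> \<Psi> (0\<^sub>v M) U k"
    unfolding X_def by (rule traj_superposition[OF \<Phi> \<Psi> X0 U])
  also have "traj \<Phi> \<Psi> (0\<^sub>v M) U k = ctrb_gramian \<Phi> \<Psi> k *\<^sub>v w"
    unfolding U_def by (rule traj_gramian_input[OF \<Phi> \<Psi> w])
  also have "ctrb_gramian \<Phi> \<Psi> k *\<^sub>v w = - X"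
    using G G' X by (simp add: w_def assoc_mult_mat_vec[symmetric, of _ M M _ M])
  also have "X + - X = 0\<^sub>v M" using X by simp
  finally have "traj \<Phi> \<Psi> X0 U k = 0\<^sub>v (dim_row \<Phi>)" using \<Phi> by simp
  moreover have "\<forall>j. U j \<in> carrier_vec (dim_col \<Psi>)" using U \<Psi> by simp
  ultimately show "\<exists>K U. (\<forall>k. U k \<in> carrier_vec (dim_col \<Psi>)) \<and> traj \<Phi> \<Psi> X0 U K = 0\<^sub>v (dim_row \<Phi>)"
    by blast
qed

theorem hautus_ds_controllable:
  fixes \<Phi> \<Psi> :: "real mat"
  assumes \<Phi>: "\<Phi> \<in> carrier_mat M M" and \<Psi>: "\<Psi> \<in> carrier_mat M P"
    and hautus: "\<And>z \<theta>. z \<in> carrier_vec M \<Longrightarrow> row_mult z (cmat \<Phi>) = \<theta> \<cdot>\<^sub>v z \<Longrightarrow>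
      row_mult z (cmat \<Psi>) = 0\<^sub>v P \<Longrightarrow> z = 0\<^sub>v M"
  shows "ds_controllable \<Phi> \<Psi>"
proof (rule ds_controllable_if_gramian_invertible[OF \<Phi> \<Psi>])
  have G: "ctrb_gramian \<Phi> \<Psi> M \<in> carrier_mat M M" by (rule ctrb_gramian_carrier[OF \<Phi> \<Psi>])
  show "det (ctrb_gramian \<Phi> \<Psi> M) \<noteq> 0"
  proof
    assume "det (ctrb_gramian \<Phi> \<Psi> M) = 0"
    then obtain y where y: "y \<in> carrier_vec M" "y \<noteq> 0\<^sub>v M" "ctrb_gramian \<Phi> \<Psi> M *\<^sub>v y = 0\<^sub>v M"
      using det_0_iff_vec_prod_zero[OF G] by auto
    let ?F = "cmat (\<Phi>\<^sup>T)" and ?P = "cmat (\<Psi>\<^sup>T)" and ?y = "map_vec complex_of_real y"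
    have F: "?F \<in> carrier_mat M M" and P: "?P \<in> carrier_mat P M" using \<Phi> \<Psi> by auto
    have y': "?y \<in> carrier_vec M" "?y \<noteq> 0\<^sub>v M"
    proof -
      show "?y \<in> carrier_vec M" using y(1) by simp
      show "?y \<noteq> 0\<^sub>v M"
      proof
        assume "?y = 0\<^sub>v M"
        then have "y = 0\<^sub>v M" using y(1) by (intro eq_vecI) (auto simp: vec_eq_iff)
        then show False using y(2) by contradiction
      qed
    qed
    have ann: "?P *\<^sub>v (mult_mat_vec ?F ^^ j) ?y = 0\<^sub>v P" if "j < M" for j
    proof -
      have "?P *\<^sub>v (mult_mat_vec ?F ^^ j) ?y = map_vec complex_of_real (\<Psi>\<^sup>T *\<^sub>v (mult_mat_vec \<Phi>\<^sup>T ^^ j) y)"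
        using \<Phi> \<Psi> y(1) krylov_carrier[of "\<Phi>\<^sup>T" M y j]
        by (simp add: of_real_hom.krylov_hom of_real_hom.mult_mat_vec_hom[of _ P M])
      then show ?thesis using ctrb_gramian_null_vector[OF \<Phi> \<Psi> y(1,3) that] by simp
    qed
    obtain z \<theta> where z: "z \<in> carrier_vec M" "z \<noteq> 0\<^sub>v M" "?F *\<^sub>v z = \<theta> \<cdot>\<^sub>v z" "?P *\<^sub>v z = 0\<^sub>v P"
      by (rule krylov_eigenvector[OF F P y' ann])
    have "row_mult z (cmat \<Phi>) = \<theta> \<cdot>\<^sub>v z" "row_mult z (cmat \<Psi>) = 0\<^sub>v P"
      using z \<Phi> \<Psi> by (simp_all add: row_mult_eq_transpose map_mat_transpose)
    then show False using hautus z(1,2) by blast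
  qed
qed

section \<open>Networked sampled-data systems\<close>

lemma row_mult_kron_network:
  fixes E H W :: "'a :: comm_ring_1 mat"
  assumes E: "E \<in> carrier_mat n n" and H: "H \<in> carrier_mat n n" and W: "W \<in> carrier_mat N N"
    and v: "v \<in> carrier_vec N" "row_mult v W = \<mu> \<cdot>\<^sub>v v" and \<xi>: "\<xi> \<in> carrier_vec n"
  shows "row_mult (kron_vec v \<xi>) (kron (1\<^sub>m N) E + kron W H) = kron_vec v (row_mult \<xi> (E + \<mu> \<cdot>\<^sub>m H))"
proof -
  have \<xi>E: "row_mult \<xi> E \<in> carrier_vec n" and \<xi>H: "row_mult \<xi> H \<in> carrier_vec n"
    using E H by (auto intro: carrier_vecI)
  have "row_mult (kron_vec v \<xi>) (kron (1\<^sub>m N) E + kron W H)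
      = row_mult (kron_vec v \<xi>) (kron (1\<^sub>m N) E) + row_mult (kron_vec v \<xi>) (kron W H)"
    using E H W v \<xi> by (intro row_mult_add_mat[of _ "N * n" "N * n"]) (auto simp: kron_carrier_mat kron_vec_carrier)
  also have "\<dots> = kron_vec v (row_mult \<xi> E) + kron_vec (\<mu> \<cdot>\<^sub>v v) (row_mult \<xi> H)"
    using E H W v \<xi> by (simp add: row_mult_kron[of _ N N _ n n])
  also have "\<dots> = kron_vec v (row_mult \<xi> E + \<mu> \<cdot>\<^sub>v row_mult \<xi> H)"
    using v \<xi>E \<xi>H by (simp add: kron_vec_smult_left kron_vec_add_right)
  also have "row_mult \<xi> E + \<mu> \<cdot>\<^sub>v row_mult \<xi> H = row_mult \<xi> (E + \<mu> \<cdot>\<^sub>m H)"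
    using E H \<xi> by (simp add: row_mult_add_mat[of _ n n] row_mult_smult_mat)
  finally show ?thesis .
qed

lemma kron_network_left_eigenvector:
  fixes E H W :: "'a :: field mat"
  assumes E: "E \<in> carrier_mat n n" and H: "H \<in> carrier_mat n n" and W: "W \<in> carrier_mat N N"
    and v: "\<forall>k<N. v k \<in> carrier_vec N" "lin_indpt_family N v"
    and v_eig: "\<forall>k<N. row_mult (v k) W = lam k \<cdot>\<^sub>v v k"
    and \<xi>: "\<And>k. \<xi> k \<in> carrier_vec n"
    and eig: "row_mult (finsum_vec TYPE('a) (N * n) (\<lambda>k. kron_vec (v k) (\<xi> k)) {..<N}) (kron (1\<^sub>m N) E + kron W H)
      = \<theta> \<cdot>\<^sub>v finsum_vec TYPE('a) (N * n) (\<lambda>k. kron_vec (v k) (\<xi> k)) {..<N}"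
    and k: "k < N"
  shows "row_mult (\<xi> k) (E + lam k \<cdot>\<^sub>m H) = \<theta> \<cdot>\<^sub>v \<xi> k"
proof (rule kron_vec_expansion_unique[OF v _ _ _ k])
  have \<Phi>: "kron (1\<^sub>m N) E + kron W H \<in> carrier_mat (N * n) (N * n)"
    using E H W by (simp add: kron_carrier_mat)
  have "finsum_vec TYPE('a) (N * n) (\<lambda>k. kron_vec (v k) (row_mult (\<xi> k) (E + lam k \<cdot>\<^sub>m H))) {..<N}
      = finsum_vec TYPE('a) (N * n) (\<lambda>k. row_mult (kron_vec (v k) (\<xi> k)) (kron (1\<^sub>m N) E + kron W H)) {..<N}"
    using E H W v v_eig \<xi>
    by (intro finsum_vec_cong) (auto simp: row_mult_kron_network kron_vec_carrier intro: carrier_vecI)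
  also have "\<dots> = row_mult (finsum_vec TYPE('a) (N * n) (\<lambda>k. kron_vec (v k) (\<xi> k)) {..<N}) (kron (1\<^sub>m N) E + kron W H)"
    using v(1) \<xi> by (intro row_mult_finsum_vec[OF \<Phi>, symmetric]) (auto simp: kron_vec_carrier)
  also have "\<dots> = finsum_vec TYPE('a) (N * n) (\<lambda>k. \<theta> \<cdot>\<^sub>v kron_vec (v k) (\<xi> k)) {..<N}"
    unfolding eig using v(1) \<xi> by (intro smult_finsum_vec) (auto simp: kron_vec_carrier)
  also have "\<dots> = finsum_vec TYPE('a) (N * n) (\<lambda>k. kron_vec (v k) (\<theta> \<cdot>\<^sub>v \<xi> k)) {..<N}"
  proof (rule finsum_vec_cong)
    fix k assume "k \<in> {..<N}"
    then have vk: "v k \<in> carrier_vec N" using v(1) by simp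
    show "\<theta> \<cdot>\<^sub>v kron_vec (v k) (\<xi> k) = kron_vec (v k) (\<theta> \<cdot>\<^sub>v \<xi> k)"
      by (rule kron_vec_smult_right[OF vk \<xi>])
    show "kron_vec (v k) (\<theta> \<cdot>\<^sub>v \<xi> k) \<in> carrier_vec (N * n)"
      using vk \<xi>[of k] by (simp add: kron_vec_carrier)
  qed
  finally show "finsum_vec TYPE('a) (N * n) (\<lambda>k. kron_vec (v k) (row_mult (\<xi> k) (E + lam k \<cdot>\<^sub>m H))) {..<N}
      = finsum_vec TYPE('a) (N * n) (\<lambda>k. kron_vec (v k) (\<theta> \<cdot>\<^sub>v \<xi> k)) {..<N}" .
qed (use E H \<xi> in \<open>auto intro: carrier_vecI\<close>)

lemma kron_left_eigenvectors_not_annihilated: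
  assumes ctrb_W: "ctrb_pair W D" and W: "W \<in> carrier_mat N N" and D: "D \<in> carrier_mat N N'"
    and ctrb_E: "ctrb_pair E B" and E: "E \<in> carrier_mat n n" and B: "B \<in> carrier_mat n p"
    and v: "v \<in> carrier_vec N" "v \<noteq> 0\<^sub>v N" "row_mult v W = \<mu> \<cdot>\<^sub>v v"
    and \<xi>: "\<xi> \<in> carrier_vec n" "\<xi> \<noteq> 0\<^sub>v n" "row_mult \<xi> E = \<theta> \<cdot>\<^sub>v \<xi>"
  shows "row_mult (kron_vec v \<xi>) (kron D B) \<noteq> 0\<^sub>v (N' * p)"
proof -
  have vD: "row_mult v D \<in> carrier_vec N'" "row_mult v D \<noteq> 0\<^sub>v N'"
    using D ctrb_pair_left_eigenvector[OF ctrb_W W D v] by (auto intro: carrier_vecI)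
  have \<xi>B: "row_mult \<xi> B \<in> carrier_vec p" "row_mult \<xi> B \<noteq> 0\<^sub>v p"
    using B ctrb_pair_left_eigenvector[OF ctrb_E E B \<xi>] by (auto intro: carrier_vecI)
  show ?thesis
    unfolding row_mult_kron[OF D B v(1) \<xi>(1)] by (rule kron_vec_nonzero[OF vD \<xi>B])
qed

lemma network_left_eigenvector_modes:
  fixes E H W :: "'a :: field mat"
  assumes E: "E \<in> carrier_mat n n" and H: "H \<in> carrier_mat n n" and W: "W \<in> carrier_mat N N"
    and v: "\<forall>k<N. v k \<in> carrier_vec N" "lin_indpt_family N v"
    and v_eig: "\<forall>k<N. row_mult (v k) W = lam k \<cdot>\<^sub>v v k"
    and z: "z \<in> carrier_vec (N * n)" and z\<Phi>: "row_mult z (kron (1\<^sub>m N) E + kron W H) = \<theta> \<cdot>\<^sub>v z"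
  obtains K \<xi> where "K \<subseteq> {..<N}"
    and "\<And>k. k \<in> K \<Longrightarrow> \<xi> k \<in> carrier_vec n \<and> \<xi> k \<noteq> 0\<^sub>v n \<and> row_mult (\<xi> k) (E + lam k \<cdot>\<^sub>m H) = \<theta> \<cdot>\<^sub>v \<xi> k"
    and "z = finsum_vec TYPE('a) (N * n) (\<lambda>k. kron_vec (v k) (\<xi> k)) K"
proof -
  obtain \<xi> where \<xi>: "\<And>k. \<xi> k \<in> carrier_vec n"
    and z_eq: "z = finsum_vec TYPE('a) (N * n) (\<lambda>k. kron_vec (v k) (\<xi> k)) {..<N}"
    using kron_vec_expansion[OF v z] by blast
  have eig: "row_mult (\<xi> k) (E + lam k \<cdot>\<^sub>m H) = \<theta> \<cdot>\<^sub>v \<xi> k" if "k < N" for k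
    using kron_network_left_eigenvector[OF E H W v v_eig \<xi> _ that] z\<Phi> z_eq by simp
  define K where "K = {k. k < N \<and> \<xi> k \<noteq> 0\<^sub>v n}"
  have "z = finsum_vec TYPE('a) (N * n) (\<lambda>k. kron_vec (v k) (\<xi> k)) K"
    unfolding z_eq using v(1) \<xi> by (intro finsum_kron_vec_restrict) (auto simp: K_def)
  moreover have "K \<subseteq> {..<N}" by (auto simp: K_def)
  moreover have "\<xi> k \<in> carrier_vec n \<and> \<xi> k \<noteq> 0\<^sub>v n \<and> row_mult (\<xi> k) (E + lam k \<cdot>\<^sub>m H) = \<theta> \<cdot>\<^sub>v \<xi> k"
    if "k \<in> K" for k
    using that \<xi> eig by (simp add: K_def)
  ultimately show thesis using that by blast
qed

lemma network_ds_controllable: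
  fixes E H B W D :: "real mat" and v :: "nat \<Rightarrow> complex vec" and lam :: "nat \<Rightarrow> complex"
  assumes E: "E \<in> carrier_mat n n" and H: "H \<in> carrier_mat n n" and B: "B \<in> carrier_mat n p"
    and W: "W \<in> carrier_mat N N" and D: "D \<in> carrier_mat N N"
    and v: "\<forall>k<N. v k \<in> carrier_vec N" "lin_indpt_family N v"
    and v_eig: "\<forall>k<N. row_mult (v k) (cmat W) = lam k \<cdot>\<^sub>v v k"
    and ctrb_W: "ctrb_pair (cmat W) (cmat D)"
    and ctrb_E: "\<forall>k<N. ctrb_pair (cmat E + lam k \<cdot>\<^sub>m cmat H) (cmat B)"
    and modes: "\<And>K \<theta> \<xi>. K \<subseteq> {..<N} \<Longrightarrow> 1 < card K \<Longrightarrow>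
      (\<And>k. k \<in> K \<Longrightarrow> \<xi> k \<in> carrier_vec n \<and> \<xi> k \<noteq> 0\<^sub>v n \<and>
        row_mult (\<xi> k) (cmat E + lam k \<cdot>\<^sub>m cmat H) = \<theta> \<cdot>\<^sub>v \<xi> k) \<Longrightarrow>
      row_mult (finsum_vec TYPE(complex) (N * n) (\<lambda>k. kron_vec (v k) (\<xi> k)) K)
        (kron (cmat D) (cmat B)) \<noteq> 0\<^sub>v (N * p)"
  shows "ds_controllable (kron (1\<^sub>m N) E + kron W H) (kron D B)"
proof (rule hautus_ds_controllable)
  show "kron (1\<^sub>m N) E + kron W H \<in> carrier_mat (N * n) (N * n)" "kron D B \<in> carrier_mat (N * n) (N * p)"
    using E H W D B by (auto simp: kron_carrier_mat)
  have E': "cmat E \<in> carrier_mat n n" "cmat E + lam k \<cdot>\<^sub>m cmat H \<in> carrier_mat n n" for k using E H by auto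
  have H': "cmat H \<in> carrier_mat n n" and W': "cmat W \<in> carrier_mat N N"
    and D': "cmat D \<in> carrier_mat N N" and B': "cmat B \<in> carrier_mat n p" using H W D B by auto
  fix z \<theta> assume z: "z \<in> carrier_vec (N * n)"
    and z\<Phi>: "row_mult z (cmat (kron (1\<^sub>m N) E + kron W H)) = \<theta> \<cdot>\<^sub>v z"
    and z\<Psi>: "row_mult z (cmat (kron D B)) = 0\<^sub>v (N * p)"
  have "cmat (kron (1\<^sub>m N) E + kron W H) = kron (1\<^sub>m N) (cmat E) + kron (cmat W) (cmat H)"
    using E H W by (simp add: of_real_hom.mat_hom_add[of _ "N * n" "N * n"] kron_carrier_mat
      of_real_hom.mat_hom_kron of_real_hom.mat_hom_one)
  then have "row_mult z (kron (1\<^sub>m N) (cmat E) + kron (cmat W) (cmat H)) = \<theta> \<cdot>\<^sub>v z" using z\<Phi> by simp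
  then obtain K \<xi> where K: "K \<subseteq> {..<N}"
    and \<xi>: "\<And>k. k \<in> K \<Longrightarrow> \<xi> k \<in> carrier_vec n \<and> \<xi> k \<noteq> 0\<^sub>v n \<and>
      row_mult (\<xi> k) (cmat E + lam k \<cdot>\<^sub>m cmat H) = \<theta> \<cdot>\<^sub>v \<xi> k"
    and z_K: "z = finsum_vec TYPE(complex) (N * n) (\<lambda>k. kron_vec (v k) (\<xi> k)) K"
    using network_left_eigenvector_modes[OF E'(1) H' W' v v_eig z] by blast
  have annihilated: "row_mult z (kron (cmat D) (cmat B)) = 0\<^sub>v (N * p)"
    using z\<Psi> by (simp add: of_real_hom.mat_hom_kron)
  have "finite K" using K finite_subset by blast
  then consider "K = {}" | k where "K = {k}" | "1 < card K" by (rule finite_set_card_cases)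
  then show "z = 0\<^sub>v (N * n)"
  proof cases
    case 1
    then show ?thesis using z_K by (simp add: finsum_vec_empty)
  next
    case (2 k)
    then have k: "k < N" using K by auto
    have "z = kron_vec (v k) (\<xi> k)"
      using z_K 2 finsum_vec_insert[of "{}" k "\<lambda>k. kron_vec (v k) (\<xi> k)" "N * n"] v(1) \<xi> k
      by (simp add: finsum_vec_empty kron_vec_carrier)
    moreover have "row_mult (kron_vec (v k) (\<xi> k)) (kron (cmat D) (cmat B)) \<noteq> 0\<^sub>v (N * p)"
      using ctrb_E v v_eig \<xi> 2 k lin_indpt_family_nonzero[OF v k]
      by (intro kron_left_eigenvectors_not_annihilated[OF ctrb_W W' D' _ E'(2) B']) auto
    ultimately show ?thesis using annihilated by simp
  next
    case 3
    then show ?thesis using annihilated modes[OF K 3 \<xi>] z_K by simp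
  qed
qed

theorem theorem2:
  fixes N n m p :: nat
    and A B C H W :: "real mat"
    and \<delta> :: "nat \<Rightarrow> real"
    and h :: real
    and v :: "nat \<Rightarrow> complex vec"
    and lam :: "nat \<Rightarrow> complex"
  assumes pos: "0 < N" "0 < n" "0 < m" "0 < p"
    and A: "A \<in> carrier_mat n n" and B: "B \<in> carrier_mat n p"
    and C: "C \<in> carrier_mat m n" and H: "H \<in> carrier_mat n m"
    and W: "W \<in> carrier_mat N N" and Wdiag: "\<forall>i<N. W $$ (i,i) = 0"
    and delta: "\<forall>i<N. \<delta> i \<in> {0, 1}"
    and h: "0 < h"
    and v_dim: "\<forall>k<N. v k \<in> carrier_vec N"
    and v_indep: "\<forall>c :: nat \<Rightarrow> complex.
        finsum_vec TYPE(complex) N (\<lambda>k. c k \<cdot>\<^sub>v v k) {..<N} = 0\<^sub>v N \<longrightarrow> (\<forall>k<N. c k = 0)"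
    and v_eig: "\<forall>k<N. row_mult (v k) (cmat W) = lam k \<cdot>\<^sub>v v k"
    and ctrb_W: "ctrb_pair (cmat W) (cmat (mat N N (\<lambda>(i,j). if i = j then \<delta> i else 0)))"
    and ctrb_E: "\<forall>k<N. ctrb_pair
        (cmat (exp_mat (h \<cdot>\<^sub>m A)) + lam k \<cdot>\<^sub>m cmat (int_exp_mat A h * (H * C)))
        (cmat (int_exp_mat A h * B))"
    and cond3: "\<forall>(K :: nat set) (\<theta> :: complex) (\<xi> :: nat \<Rightarrow> complex vec).
        K \<subseteq> {..<N} \<and> 1 < card K \<and>
        (\<forall>k\<in>K. eigenvalue (cmat (exp_mat (h \<cdot>\<^sub>m A)) + lam k \<cdot>\<^sub>m cmat (int_exp_mat A h * (H * C))) \<theta>) \<and>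
        (\<forall>k\<in>K. \<xi> k \<in> left_eigenspace \<theta>
                   (cmat (exp_mat (h \<cdot>\<^sub>m A)) + lam k \<cdot>\<^sub>m cmat (int_exp_mat A h * (H * C)))) \<and>
        (\<exists>k\<in>K. \<xi> k \<noteq> 0\<^sub>v n)
        \<longrightarrow> row_mult (finsum_vec TYPE(complex) (N * n) (\<lambda>k. kron_vec (v k) (\<xi> k)) K)
              (kron (cmat (mat N N (\<lambda>(i,j). if i = j then \<delta> i else 0))) (cmat (int_exp_mat A h * B)))
            \<noteq> 0\<^sub>v (N * p)"
  shows "ds_controllable
     (kron (1\<^sub>m N) (exp_mat (h \<cdot>\<^sub>m A)) + kron W (int_exp_mat A h * (H * C)))
     (kron (mat N N (\<lambda>(i,j). if i = j then \<delta> i else 0)) (int_exp_mat A h * B))"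
proof (rule network_ds_controllable[OF _ _ _ W _ v_dim _ v_eig ctrb_W ctrb_E])
  have I: "int_exp_mat A h \<in> carrier_mat n n" using A by (simp add: int_exp_mat_def)
  show "exp_mat (h \<cdot>\<^sub>m A) \<in> carrier_mat n n" using A by (simp add: exp_mat_def)
  show "int_exp_mat A h * (H * C) \<in> carrier_mat n n" "int_exp_mat A h * B \<in> carrier_mat n p"
    using I H C B by auto
  show "mat N N (\<lambda>(i, j). if i = j then \<delta> i else 0) \<in> carrier_mat N N" by simp
  show "lin_indpt_family N v" using v_indep by (simp add: lin_indpt_family_def)
  fix K \<theta> \<xi>
  let ?E = "\<lambda>k. cmat (exp_mat (h \<cdot>\<^sub>m A)) + lam k \<cdot>\<^sub>m cmat (int_exp_mat A h * (H * C))"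
  assume K: "K \<subseteq> {..<N}" "1 < card K"
    and \<xi>: "\<And>k. k \<in> K \<Longrightarrow> \<xi> k \<in> carrier_vec n \<and> \<xi> k \<noteq> 0\<^sub>v n \<and> row_mult (\<xi> k) (?E k) = \<theta> \<cdot>\<^sub>v \<xi> k"
  have E: "?E k \<in> carrier_mat n n" for k using A I H C by (simp add: exp_mat_def)
  have "\<forall>k\<in>K. eigenvalue (?E k) \<theta>" using \<xi> by (blast intro: left_eigenvector_imp_eigenvalue[OF E])
  moreover have "\<forall>k\<in>K. \<xi> k \<in> left_eigenspace \<theta> (?E k)"
    using \<xi> E carrier_matD[OF I] by (simp add: left_eigenspace_def)
  moreover have "K \<noteq> {}" using K(2) by auto
  then obtain k where "k \<in> K" by blast
  then have "\<exists>k\<in>K. \<xi> k \<noteq> 0\<^sub>v n" using \<xi> by blast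
  ultimately show "row_mult (finsum_vec TYPE(complex) (N * n) (\<lambda>k. kron_vec (v k) (\<xi> k)) K)
      (kron (cmat (mat N N (\<lambda>(i, j). if i = j then \<delta> i else 0))) (cmat (int_exp_mat A h * B))) \<noteq> 0\<^sub>v (N * p)"
    using cond3 K by blast
qed

end
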